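(* Consider adversarial training and let $T_0=\min\{t\ge0:\max_{r\in[m]}w^{(t)}_{r,1}>C_0/(\alpha m^{1/3})\}$. On the event $\mathcal E$, fix $t\in[T_0+1,T]$ and suppose the noise-stability bound $|\langle\mathbf w^{(\tau)}_r,\mathbf x_{i,j}\rangle|\le3\sigma_0\sigma_n\sqrt{d\log(16NmP/\delta)}+\dfrac{21p_{\mathrm{un}}NP\log^{1/3}T}{\sqrt d}\sqrt{\log(16N^2P^2/\delta)}$ holds for all $r\in[m]$, $i\in\mathcal S_L$, $j\ne s(\mathbf X_i)$ and all $\tau\le t$. Then for every learnable sample $i\in\mathcal S_L$, $\sum_{\tau=T_0}^{t-1}\psi(y_if_{\mathbf W^{(\tau)}}(\tilde{\mathbf X}^{(\tau)}_i))\le\dfrac{2m^{2/3}\log^{1/3}T}{C_0^2(1-\epsilon/\alpha)^3\eta\alpha^2}$ and $\psi(y_if_{\mathbf W^{(t)}}(\tilde{\mathbf X}^{(t)}_i))\le\dfrac{4m^{2/3}\log^{1/3}T}{C_0^2(1-\epsilon/\alpha)^3\eta\alpha^2(t-T_0)}$.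
   Context: Data. Fix integers $N,P,d,m$ and reals $\alpha,\sigma_n,\sigma_0,\eta,\epsilon,\Gamma>0$, $\delta\in(0,1)$, and a horizon $T\in\mathbb N$. Let $\mathbf u=\mathbf e_1$, $\mathbf v=\mathbf e_d$ and $\Pi_{\mathcal F}$ the orthogonal projection onto $\mathrm{span}\{\mathbf u,\mathbf v\}$. Fix a partition $[N]=\mathcal S_L\sqcup\mathcal S_U$, $p_{\mathrm{un}}=|\mathcal S_U|/N$. Independently for each $i$: $y_i$ uniform on $\{\pm1\}$, $s(\mathbf X_i)$ uniform on $[P]$, $\mathbf x_{i,s(\mathbf X_i)}=\alpha y_i\mathbf u$ if $i\in\mathcal S_L$ and $\alpha y_i\mathbf v$ if $i\in\mathcal S_U$, noise patches $\mathbf x_{i,p}\sim\mathcal N(\mathbf 0,\sigma_n^2(\mathbf I_d-\Pi_{\mathcal F}))$ for $p\ne s(\mathbf X_i)$, independent. Student $f_{\mathbf W}(\mathbf X)=\sum_{r=1}^m\sum_{p=1}^P[\phi(\langle\mathbf w_r,\mathbf x_p\rangle)-\phi(-\langle\mathbf w_r,\mathbf x_p\rangle)]$, $\phi(z)=(\max\{0,z\})^3$; $w^{(0)}_{r,j}\sim\mathcal N(0,\sigma_0^2)$ i.i.d. for $j<d$, $w^{(0)}_{r,d}=0$, $w_{r,d}=0$ maintained; $w_{r,1}=\langle\mathbf w_r,\mathbf e_1\rangle$. $\ell(z)=\log(1+e^{-z})$, $\psi(z)=(1+e^{z})^{-1}$. $\tilde{\mathbf X}^{(t)}_i$ maximizes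 $\ell(y_if_{\mathbf W^{(t)}}(\mathbf X'))$ over $\|\mathbf X'-\mathbf X_i\|_\infty\le\epsilon$, $\mathbf X'-\mathbf X_i\in\mathrm{span}(\mathbf x_{i,s(\mathbf X_i)})$. Adversarial training: $\mathbf W^{(t+1)}=\mathbf W^{(t)}-\frac\eta N\sum_i\nabla_{\mathbf W}\ell(y_if_{\mathbf W}(\tilde{\mathbf X}^{(t)}_i))|_{\mathbf W^{(t)}}$ with $\tilde{\mathbf X}^{(t)}_i$ fixed. $C_0>0$ is a fixed, sufficiently large absolute constant. Standing parameter conditions (for a sufficiently large universal constant $C>0$): (i) $T\ge CN/(\eta\sigma_0\sigma_n^3d^{3/2})$; (ii) $d\ge Cm^2P^2N^2\log^4(TNmP/\delta)$; (iii) $\alpha\ge C\sigma_n\sqrt d\log(TNmP/\delta)/(N^{1/3}(1-p_{\mathrm{un}})^{1/3})$; (iv) $\sigma_0\le C^{-1}\min\{\frac{1}{m^{2/3}P^{2/3}\sigma_n\sqrt d},\frac{1}{\alpha m^{2/3}},\frac{1}{\sigma_nm^2P^{1/2}d}\}/\log(TdNmP/\delta)$; (v) $\eta\le C^{-1}\min\{\frac1{\alpha^3\sigma_0},\frac1{\sigma_n^2d},\frac1{\alpha^2}\}/\log(TNmP/\delta)$; (vi) $C\sigma_nmP^{1/2}\log(TdNP/\delta)\le\epsilon<C^{-1}\min\{\alpha,\frac1{m\sigma_0d}\}$; (vii) either $p_{\mathrm{un}}=0$, or $C/N\le p_{\mathrm{un}}\le C^{-1}\log d/N$, and $N\ge CmP\log(TdNmP/\delta)$;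 (viii) $C\log(NP/\delta)\le m\le C\log^Cd$, $2\le P\le C$; (ix) $\Gamma\ge Cd$. Event $\mathcal E$: for all $r\in[m]$, $i,k\in[N]$, $j\ne s(\mathbf X_i)$, $q\ne s(\mathbf X_k)$, $(i,j)\ne(k,q)$: $\frac12\sigma_n^2d\le\|\mathbf x_{i,j}\|_2^2\le\frac32\sigma_n^2d$; $|\langle\mathbf x_{i,j},\mathbf x_{k,q}\rangle|\le2\sigma_n^2\sqrt{d\log(16N^2P^2/\delta)}$; $\|\mathbf x_{i,j}\|_\infty\le\sigma_n\sqrt{2\log(16dNP/\delta)}$; $\|\mathbf w_r^{(0)}\|_2\le2\sigma_0\sqrt d$; $|\langle\mathbf w^{(0)}_r,\mathbf e_1\rangle|\le\sigma_0\sqrt{2\log(16m/\delta)}$; $|\langle\mathbf w^{(0)}_r,\mathbf x_{i,j}\rangle|\le2\sigma_0\sigma_n\sqrt{d\log(16NmP/\delta)}$; $\frac12\sigma_0\le\max_r\langle\mathbf w^{(0)}_r,\mathbf e_1\rangle\le\sigma_0\sqrt{2\log(16m/\delta)}$; $\frac14\sigma_0\sigma_n\sqrt d\le\max_ry_i\langle\mathbf w^{(0)}_r,\mathbf x_{i,j}\rangle\le2\sigma_0\sigma_n\sqrt{d\log(16NmP/\delta)}$. *)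

theory Defs
  imports "HOL-Analysis.Analysis"
begin

text \<open>Vectors in R^d are functions nat => real, coordinates indexed by 1..d.
  A datum X is a function (patch index p in 1..P) => vector.
  Weights W are functions (neuron r in 1..m) => vector.\<close>

definition inner_d :: "nat \<Rightarrow> (nat \<Rightarrow> real) \<Rightarrow> (nat \<Rightarrow> real) \<Rightarrow> real" where
  "inner_d d a b = (\<Sum>j=1..d. a j * b j)"

definition unit_vec :: "nat \<Rightarrow> nat \<Rightarrow> real" where
  "unit_vec k = (\<lambda>j. if j = k then 1 else 0)"

definition sqnorm_d :: "nat \<Rightarrow> (nat \<Rightarrow> real) \<Rightarrow> real" where
  "sqnorm_d d a = (\<Sum>j=1..d. (a j)^2)"

definition supnorm_d :: "nat \<Rightarrow> (nat \<Rightarrow> real) \<Rightarrow> real" where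
  "supnorm_d d a = Max ((\<lambda>j. \<bar>a j\<bar>) ` {1..d})"

definition phi :: "real \<Rightarrow> real" where
  "phi z = (max 0 z) ^ 3"

definition fnet :: "nat \<Rightarrow> nat \<Rightarrow> nat \<Rightarrow> (nat \<Rightarrow> nat \<Rightarrow> real) \<Rightarrow> (nat \<Rightarrow> nat \<Rightarrow> real) \<Rightarrow> real" where
  "fnet m P d W X = (\<Sum>r=1..m. \<Sum>p=1..P. phi (inner_d d (W r) (X p)) - phi (- inner_d d (W r) (X p)))"

definition logloss :: "real \<Rightarrow> real" where
  "logloss z = ln (1 + exp (- z))"

definition psi :: "real \<Rightarrow> real" where
  "psi z = 1 / (1 + exp z)"

definition adm_set :: "nat \<Rightarrow> real \<Rightarrow> nat \<Rightarrow> (nat \<Rightarrow> nat \<Rightarrow> real) \<Rightarrow> (nat \<Rightarrow> nat \<Rightarrow> real) set" where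
  "adm_set d eps s X = {X'. \<exists>c::real.
      (\<forall>p. X' p = (if p = s then (\<lambda>j. X p j + c * X p j) else X p))
      \<and> (\<forall>j\<in>{1..d}. \<bar>c * X s j\<bar> \<le> eps)}"

definition grad_entry :: "nat \<Rightarrow> nat \<Rightarrow> nat \<Rightarrow> (nat \<Rightarrow> nat \<Rightarrow> real) \<Rightarrow> real \<Rightarrow> (nat \<Rightarrow> nat \<Rightarrow> real) \<Rightarrow> nat \<Rightarrow> nat \<Rightarrow> real" where
  "grad_entry m P d W yv X r j =
     deriv (\<lambda>h. logloss (yv * fnet m P d (W(r := (W r)(j := W r j + h))) X)) 0"

definition event_E :: "nat \<Rightarrow> nat \<Rightarrow> nat \<Rightarrow> nat \<Rightarrow> real \<Rightarrow> real \<Rightarrow> real \<Rightarrow>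
    (nat \<Rightarrow> real) \<Rightarrow> (nat \<Rightarrow> nat) \<Rightarrow> (nat \<Rightarrow> nat \<Rightarrow> nat \<Rightarrow> real) \<Rightarrow> (nat \<Rightarrow> nat \<Rightarrow> real) \<Rightarrow> bool" where
  "event_E N P d m sn s0 \<delta> y s x w0 \<longleftrightarrow>
    (\<forall>i\<in>{1..N}. \<forall>j\<in>{1..P}. j \<noteq> s i \<longrightarrow>
        sn^2 * d / 2 \<le> sqnorm_d d (x i j) \<and> sqnorm_d d (x i j) \<le> 3/2 * sn^2 * d
      \<and> supnorm_d d (x i j) \<le> sn * sqrt (2 * ln (16 * d * N * P / \<delta>))) \<and>
    (\<forall>i\<in>{1..N}. \<forall>j\<in>{1..P}. \<forall>k\<in>{1..N}. \<forall>q\<in>{1..P}.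
        j \<noteq> s i \<longrightarrow> q \<noteq> s k \<longrightarrow> (i, j) \<noteq> (k, q) \<longrightarrow>
        \<bar>inner_d d (x i j) (x k q)\<bar> \<le> 2 * sn^2 * sqrt (d * ln (16 * N^2 * P^2 / \<delta>))) \<and>
    (\<forall>r\<in>{1..m}. sqrt (sqnorm_d d (w0 r)) \<le> 2 * s0 * sqrt d
      \<and> \<bar>inner_d d (w0 r) (unit_vec 1)\<bar> \<le> s0 * sqrt (2 * ln (16 * m / \<delta>))) \<and>
    (\<forall>r\<in>{1..m}. \<forall>i\<in>{1..N}. \<forall>j\<in>{1..P}. j \<noteq> s i \<longrightarrow>
        \<bar>inner_d d (w0 r) (x i j)\<bar> \<le> 2 * s0 * sn * sqrt (d * ln (16 * N * m * P / \<delta>))) \<and>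
    s0 / 2 \<le> Max ((\<lambda>r. inner_d d (w0 r) (unit_vec 1)) ` {1..m}) \<and>
    Max ((\<lambda>r. inner_d d (w0 r) (unit_vec 1)) ` {1..m}) \<le> s0 * sqrt (2 * ln (16 * m / \<delta>)) \<and>
    (\<forall>i\<in>{1..N}. \<forall>j\<in>{1..P}. j \<noteq> s i \<longrightarrow>
        s0 * sn * sqrt d / 4 \<le> Max ((\<lambda>r. y i * inner_d d (w0 r) (x i j)) ` {1..m})
      \<and> Max ((\<lambda>r. y i * inner_d d (w0 r) (x i j)) ` {1..m}) \<le> 2 * s0 * sn * sqrt (d * ln (16 * N * m * P / \<delta>)))"

definition std_conditions :: "real \<Rightarrow> nat \<Rightarrow> nat \<Rightarrow> nat \<Rightarrow> nat \<Rightarrow> real \<Rightarrow> real \<Rightarrow> real \<Rightarrow> real \<Rightarrow> real \<Rightarrow> real \<Rightarrow> real \<Rightarrow> nat \<Rightarrow> real \<Rightarrow> bool" where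
  "std_conditions C N P d m \<alpha> sn s0 \<eta> \<epsilon> \<Gamma> \<delta> T pun \<longleftrightarrow>
    real T \<ge> C * N / (\<eta> * s0 * sn^3 * d powr (3/2)) \<and>
    real d \<ge> C * m^2 * P^2 * N^2 * (ln (T * N * m * P / \<delta>))^4 \<and>
    \<alpha> \<ge> C * sn * sqrt d * ln (T * N * m * P / \<delta>) / (N powr (1/3) * (1 - pun) powr (1/3)) \<and>
    s0 \<le> (1/C) * min (1 / (m powr (2/3) * P powr (2/3) * sn * sqrt d))
                 (min (1 / (\<alpha> * m powr (2/3))) (1 / (sn * m^2 * sqrt P * d)))
          / ln (T * d * N * m * P / \<delta>) \<and>
    \<eta> \<le> (1/C) * min (1 / (\<alpha>^3 * s0)) (min (1 / (sn^2 * d)) (1 / \<alpha>^2)) / ln (T * N * m * P / \<delta>) \<and>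
    C * sn * m * sqrt P * ln (T * d * N * P / \<delta>) \<le> \<epsilon> \<and>
    \<epsilon> < (1/C) * min \<alpha> (1 / (m * s0 * d)) \<and>
    (pun = 0 \<or> (C / N \<le> pun \<and> pun \<le> (1/C) * ln d / N)) \<and>
    real N \<ge> C * m * P * ln (T * d * N * m * P / \<delta>) \<and>
    C * ln (N * P / \<delta>) \<le> m \<and> real m \<le> C * (ln d) powr C \<and>
    2 \<le> P \<and> real P \<le> C \<and>
    \<Gamma> \<ge> C * d"

end

theory Submission
  imports Defs
begin

text \<open>On a learnable sample the adversary can only rescale the signal patch by a factor \<open>1 + c\<close>
  with \<open>|c| \<le> \<epsilon>/\<alpha>\<close>. Hence, up to the noise patches (whose contribution is at most 1 by the
  noise-stability hypothesis), every learnable margin equals \<open>(1 - \<epsilon>/\<alpha>)\<^sup>3 \<alpha>\<^sup>3 \<Sum>\<^sub>r w\<^sub>r\<^sub>1\<^sup>3\<close>,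
  the first coordinates receive the gradient \<open>3 \<psi> (1 + c)\<^sup>3 \<alpha>\<^sup>3 w\<^sub>r\<^sub>1\<^sup>2\<close> from learnable samples
  and nothing from unlearnable ones. So every \<open>w\<^sub>r\<^sub>1\<close> increases, all learnable margins agree up to 2,
  and from \<open>T\<^sub>0\<close> on the leading coordinate \<open>u\<close> satisfies \<open>u' \<ge> u + k u\<^sup>2 \<psi>\<^sub>i\<close> with
  \<open>k = \<eta> \<alpha>\<^sup>3 (1 - \<epsilon>/\<alpha>)\<^sup>3 / 6\<close> and \<open>u' \<le> 2 u\<close>. Telescoping \<open>1/u\<close> bounds \<open>\<Sum> \<psi>\<^sub>i\<close> by
  \<open>2 / (k u(T\<^sub>0))\<close>, and since margins never drop by more than 2, \<open>\<psi>\<^sub>i\<close> at time \<open>t\<close> is at most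
  9 times its value at any earlier time. The standing conditions with \<open>C \<ge> max 10\<^sup>1\<^sup>2 (exp (27000 C\<^sub>0\<^sup>3))\<close>
  supply all numerical side conditions; \<open>27000 = 30\<^sup>3\<close> makes \<open>(ln T)\<^sup>1\<^sup>/\<^sup>3 \<ge> 30 C\<^sub>0\<close>.\<close>

lemma psi_pos: "0 < psi z"
  unfolding psi_def by (simp add: add_pos_pos)

lemma psi_antimono: "a \<le> b \<Longrightarrow> psi b \<le> psi a"
  unfolding psi_def by (simp add: add_pos_pos frac_le)

lemma psi_le_exp_mult_psi_add: "0 \<le> a \<Longrightarrow> psi z \<le> exp a * psi (z + a)"
  unfolding psi_def by (simp add: field_simps add_pos_pos exp_add)

lemma psi_le_exp_neg: "psi z \<le> exp (- z)"
  unfolding psi_def by (simp add: field_simps exp_minus add_pos_pos)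

lemma logloss_le_logloss_iff: "logloss a \<le> logloss b \<longleftrightarrow> b \<le> a"
  unfolding logloss_def by (simp add: add_pos_pos)

lemma has_real_derivative_logloss: "(logloss has_real_derivative - psi z) (at z)"
proof -
  have "((\<lambda>z. ln (1 + exp (- z))) has_real_derivative 1 / (1 + exp (- z)) * (exp (- z) * - 1)) (at z)"
    by (auto intro!: derivative_eq_intros simp: add_pos_pos)
  moreover have "1 / (1 + exp (- z)) * (exp (- z) * - 1) = - psi z"
    unfolding psi_def by (simp add: field_simps exp_minus)
  ultimately show ?thesis unfolding logloss_def by simp
qed

lemma exp_two_le_nine: "exp (2::real) \<le> 9"
proof -
  have "exp (2::real) = exp 1 * exp 1" by (simp flip: exp_add)
  also have "\<dots> \<le> 3 * 3" using exp_le by (intro mult_mono) auto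
  finally show ?thesis by simp
qed

lemma mult_exp_neg_cube_le: "0 \<le> (w::real) \<Longrightarrow> w * exp (- (w^3 / 16)) \<le> 16"
proof -
  assume w: "0 \<le> w"
  have "w \<le> 16 + w^3"
  proof (cases "w \<le> 1")
    case True thus ?thesis using w zero_le_power[of w 3] by linarith
  next
    case False
    hence "w * 1 \<le> w * w^2" using w by (intro mult_left_mono) (auto simp: one_le_power)
    thus ?thesis using w by (simp add: power3_eq_cube power2_eq_square)
  qed
  also have "\<dots> \<le> 16 * exp (w^3 / 16)"
    using exp_ge_add_one_self[of "w^3 / 16"] by linarith
  finally show ?thesis by (simp add: exp_minus field_simps)
qed

lemma reciprocal_growth_step:
  fixes u u' k p :: real
  assumes "0 < k" "0 < u" "u + k * u^2 * p \<le> u'" "u' \<le> 2 * u" "0 \<le> p"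
  shows "p \<le> 2 / k * (1 / u - 1 / u')"
proof -
  have "0 \<le> k * u^2 * p" using assms by simp
  then have "u \<le> u'" using assms(3) by linarith
  have "k * u * u' * p \<le> k * u * (2 * u) * p"
    using assms by (intro mult_right_mono mult_left_mono) auto
  also have "\<dots> \<le> 2 * (u' - u)" using assms by (simp add: power2_eq_square)
  finally have "k * u * u' * p \<le> 2 * (u' - u)" .
  thus ?thesis using assms \<open>u \<le> u'\<close> by (simp add: field_simps)
qed

text \<open>Discrete analogue of integrating \<open>u' \<ge> k u\<^sup>2 p\<close>: the quantity \<open>1/u\<close> decreases by at
  least \<open>k p / 2\<close> per step as long as \<open>u\<close> at most doubles.\<close>
lemma sum_le_of_reciprocal_growth:
  fixes u p :: "nat \<Rightarrow> real"
  assumes k: "0 < k" and u0: "0 < u T0"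
    and step: "\<And>\<tau>. T0 \<le> \<tau> \<Longrightarrow> \<tau> < t \<Longrightarrow> u \<tau> + k * (u \<tau>)^2 * p \<tau> \<le> u (Suc \<tau>) \<and> u (Suc \<tau>) \<le> 2 * u \<tau>"
    and p: "\<And>\<tau>. 0 \<le> p \<tau>"
    and "T0 \<le> t"
  shows "(\<Sum>\<tau>=T0..<t. p \<tau>) \<le> 2 / (k * u T0)"
proof -
  have "T0 \<le> t' \<Longrightarrow> t' \<le> t \<Longrightarrow> (\<Sum>\<tau>=T0..<t'. p \<tau>) \<le> 2 / k * (1 / u T0 - 1 / u t') \<and> u T0 \<le> u t'" for t'
  proof (induction t')
    case (Suc n)
    show ?case
    proof (cases "T0 \<le> n")
      case True
      with Suc have IH: "(\<Sum>\<tau>=T0..<n. p \<tau>) \<le> 2 / k * (1 / u T0 - 1 / u n)" "u T0 \<le> u n" by auto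
      have st: "u n + k * (u n)^2 * p n \<le> u (Suc n)" "u (Suc n) \<le> 2 * u n"
        using step[of n] True Suc.prems by auto
      have "0 < u n" using IH(2) u0 by linarith
      with st have "p n \<le> 2 / k * (1 / u n - 1 / u (Suc n))"
        using reciprocal_growth_step k p by blast
      moreover have "u n \<le> u (Suc n)"
        using st(1) mult_nonneg_nonneg[OF mult_nonneg_nonneg[of k "(u n)^2"] p[of n]] k by simp
      ultimately show ?thesis using IH True by (simp add: algebra_simps)
    next
      case False
      with Suc.prems have "T0 = Suc n" by simp
      then show ?thesis by simp
    qed
  qed simp
  then have "(\<Sum>\<tau>=T0..<t. p \<tau>) \<le> 2 / k * (1 / u T0 - 1 / u t)" "u T0 \<le> u t" using \<open>T0 \<le> t\<close> by auto
  moreover have "0 < u t" using calculation(2) u0 by linarith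
  then have "2 / k * (1 / u T0 - 1 / u t) \<le> 2 / k * (1 / u T0)"
    using k by (intro mult_left_mono) auto
  ultimately show ?thesis by simp
qed

lemma sqrt_le_self: "1 \<le> (x::real) \<Longrightarrow> sqrt x \<le> x"
  using real_sqrt_le_mono[of x "x * x"] by (simp add: mult_le_cancel_left1)

lemma one_le_mult: "1 \<le> a \<Longrightarrow> 1 \<le> b \<Longrightarrow> 1 \<le> a * (b::real)"
  using mult_mono[of 1 a 1 b] by simp

lemma le_divide_of_le_one: "0 \<le> (x::real) \<Longrightarrow> 0 < \<delta> \<Longrightarrow> \<delta> \<le> 1 \<Longrightarrow> x \<le> x / \<delta>"
  by (simp add: le_divide_eq mult_left_le)

lemma one_le_ln: "3 \<le> (x::real) \<Longrightarrow> 1 \<le> ln x"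
  using exp_le by (subst ln_ge_iff) auto

lemma powr_one_third_le: "0 \<le> (x::real) \<Longrightarrow> x \<le> L \<Longrightarrow> 1 \<le> L \<Longrightarrow> x powr (1/3) \<le> L"
  by (cases "x \<le> 1") (auto intro: order_trans[OF powr_le1] order_trans[OF powr_mono[of "1/3" 1 x]])

lemma cube_add_le:
  assumes "0 \<le> a" "0 \<le> b"
  shows "(a + b)^3 \<le> 4 * (a^3 + (b::real)^3)"
proof -
  have "4 * (a^3 + b^3) - (a + b)^3 = 3 * ((a + b) * (a - b)^2)"
    by (simp add: power2_eq_square power3_eq_cube algebra_simps)
  moreover have "0 \<le> (a + b) * (a - b)^2" using assms by simp
  ultimately show ?thesis by linarith
qed

lemma le_scaled_min:
  fixes x c a b L :: real
  assumes "x \<le> c * min a b / L" "0 \<le> c" "0 < L"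
  shows "x \<le> c * a / L" and "x \<le> c * b / L"
proof -
  have "c * min a b \<le> c * a" "c * min a b \<le> c * b"
    using assms(2) by (auto intro!: mult_left_mono)
  then have "c * min a b / L \<le> c * a / L" "c * min a b / L \<le> c * b / L"
    using assms(3) by (simp_all add: divide_right_mono)
  then show "x \<le> c * a / L" "x \<le> c * b / L" using assms(1) by linarith+
qed

section \<open>The cubic network and its gradient\<close>

lemma phi_sub_phi_neg: "phi z - phi (- z) = z ^ 3"
  unfolding phi_def by (cases "z \<ge> 0") (auto simp: max_def power3_eq_cube)

lemma fnet_eq_sum_cubes: "fnet m P d W X = (\<Sum>r=1..m. \<Sum>p=1..P. (inner_d d (W r) (X p)) ^ 3)"
  unfolding fnet_def by (simp add: phi_sub_phi_neg)

lemma inner_d_add_coord: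
  assumes "j \<in> {1..d}"
  shows "inner_d d (w(j := w j + h)) Y = inner_d d w Y + h * Y j"
proof -
  have "inner_d d (w(j := w j + h)) Y = (\<Sum>i=1..d. w i * Y i + (if i = j then h * Y j else 0))"
    unfolding inner_d_def by (rule sum.cong) (auto simp: algebra_simps)
  also have "\<dots> = inner_d d w Y + h * Y j"
    using assms by (simp add: sum.distrib inner_d_def)
  finally show ?thesis .
qed

lemma inner_d_unit_vec: "inner_d d w (\<lambda>j. a * unit_vec k j) = (if k \<in> {1..d} then a * w k else 0)"
  unfolding inner_d_def unit_vec_def by (auto simp: if_distrib cong: if_cong)

lemma inner_d_scale: "inner_d d w (\<lambda>j. z j + c * z j) = (1 + c) * inner_d d w z"
  unfolding inner_d_def by (simp add: sum_distrib_left algebra_simps)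

lemma grad_entry_eq:
  assumes j: "j \<in> {1..d}" and r: "r \<in> {1..m}"
  shows "grad_entry m P d W yv X r j =
    - psi (yv * fnet m P d W X) * yv * (\<Sum>p=1..P. 3 * (inner_d d (W r) (X p))^2 * X p j)"
proof -
  define a where "a r' p = inner_d d (W r') (X p)" for r' p
  define g where "g h = (\<Sum>r'=1..m. \<Sum>p=1..P. (a r' p + (if r' = r then h * X p j else 0)) ^ 3)" for h
  have fnet_g: "fnet m P d (W(r := (W r)(j := W r j + h))) X = g h" for h
    unfolding fnet_eq_sum_cubes g_def a_def
    by (intro sum.cong refl) (auto simp: inner_d_add_coord[OF j])
  have "(g has_real_derivative (\<Sum>r'=1..m. \<Sum>p=1..P.
      3 * (a r' p + (if r' = r then 0 * X p j else 0))^2 * (if r' = r then X p j else 0))) (at 0)"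
    unfolding g_def by (intro DERIV_sum) (auto intro!: derivative_eq_intros simp: power2_eq_square)
  also have "(\<Sum>r'=1..m. \<Sum>p=1..P.
      3 * (a r' p + (if r' = r then 0 * X p j else 0))^2 * (if r' = r then X p j else 0))
      = (\<Sum>r'=1..m. if r' = r then (\<Sum>p=1..P. 3 * (a r p)^2 * X p j) else 0)"
    by (intro sum.cong) auto
  also have "\<dots> = (\<Sum>p=1..P. 3 * (a r p)^2 * X p j)"
    using r by simp
  finally have "((\<lambda>h. logloss (yv * g h)) has_real_derivative
      - psi (yv * g 0) * (yv * (\<Sum>p=1..P. 3 * (a r p)^2 * X p j))) (at 0)"
    by (intro DERIV_chain2[OF has_real_derivative_logloss]) (auto intro!: derivative_eq_intros)
  then show ?thesis
    unfolding grad_entry_def fnet_g using fnet_g[of 0] by (simp add: DERIV_imp_deriv a_def)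
qed

lemma abs_sum_cubes_le:
  fixes a :: "nat \<Rightarrow> nat \<Rightarrow> real"
  assumes B: "0 \<le> B" and a: "\<And>r p. r \<in> {1..m} \<Longrightarrow> p \<in> {1..P} - {s} \<Longrightarrow> \<bar>a r p\<bar> \<le> B"
  shows "\<bar>\<Sum>r=1..m. \<Sum>p\<in>{1..P}-{s}. (a r p)^3\<bar> \<le> real m * real P * B^3"
proof -
  have "\<bar>\<Sum>r=1..m. \<Sum>p\<in>{1..P}-{s}. (a r p)^3\<bar> \<le> (\<Sum>r=1..m. \<Sum>p\<in>{1..P}-{s}. \<bar>a r p\<bar>^3)"
    by (rule order_trans[OF sum_abs], rule sum_mono, rule order_trans[OF sum_abs]) (simp add: power_abs)
  also have "\<dots> \<le> (\<Sum>r=1..m. \<Sum>p\<in>{1..P}-{s}. B^3)"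
    using a by (intro sum_mono power_mono) auto
  also have "\<dots> = m * (card ({1..P}-{s}) * B^3)" by simp
  also have "\<dots> \<le> m * (P * B^3)"
    using card_mono[of "{1..P}" "{1..P}-{s}"] B by (intro mult_left_mono mult_right_mono) auto
  finally show ?thesis by (simp add: mult.assoc)
qed

lemma event_E_first_coord_lower:
  assumes "event_E N P d m sn s0 \<delta> y s x w0" "1 \<le> d" "r \<in> {1..m}"
  shows "- (s0 * sqrt (2 * ln (16 * real m / \<delta>))) \<le> w0 r 1"
proof -
  have "\<bar>inner_d d (w0 r) (unit_vec 1)\<bar> \<le> s0 * sqrt (2 * ln (16 * real m / \<delta>))"
    using assms(1,3) unfolding event_E_def by blast
  moreover have "inner_d d (w0 r) (unit_vec 1) = w0 r 1"
    using inner_d_unit_vec[of d "w0 r" 1 1] assms(2) by simp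
  ultimately show ?thesis by linarith
qed

definition scale_patch :: "nat \<Rightarrow> real \<Rightarrow> (nat \<Rightarrow> nat \<Rightarrow> real) \<Rightarrow> nat \<Rightarrow> nat \<Rightarrow> real" where
  "scale_patch s c X = (\<lambda>p. if p = s then (\<lambda>j. X p j + c * X p j) else X p)"

lemma mem_adm_set_iff:
  "X' \<in> adm_set d eps s X \<longleftrightarrow> (\<exists>c. X' = scale_patch s c X \<and> (\<forall>j\<in>{1..d}. \<bar>c * X s j\<bar> \<le> eps))"
  unfolding adm_set_def scale_patch_def by (auto simp: fun_eq_iff)

lemma margin_scale_patch:
  assumes y: "y \<in> {-1, 1}" and s: "s \<in> {1..P}" and d: "1 \<le> d"
    and xs: "x s = (\<lambda>j. \<alpha> * y * unit_vec 1 j)"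
  shows "y * fnet m P d W (scale_patch s c x) = (1 + c)^3 * \<alpha>^3 * (\<Sum>r=1..m. (W r 1)^3)
           + y * (\<Sum>r=1..m. \<Sum>p\<in>{1..P}-{s}. (inner_d d (W r) (x p))^3)"
proof -
  have "y * (\<Sum>p=1..P. (inner_d d (W r) (scale_patch s c x p))^3)
      = (1 + c)^3 * \<alpha>^3 * (W r 1)^3 + y * (\<Sum>p\<in>{1..P}-{s}. (inner_d d (W r) (x p))^3)" for r
  proof -
    have "inner_d d (W r) (scale_patch s c x s) = (1 + c) * (\<alpha> * y * W r 1)"
      using d by (simp add: scale_patch_def inner_d_scale xs inner_d_unit_vec)
    moreover have "y * ((1 + c) * (\<alpha> * y * W r 1))^3 = (1 + c)^3 * \<alpha>^3 * (W r 1)^3"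
      using y by (auto simp: power_mult_distrib)
    moreover have "(\<Sum>p\<in>{1..P}-{s}. (inner_d d (W r) (scale_patch s c x p))^3)
        = (\<Sum>p\<in>{1..P}-{s}. (inner_d d (W r) (x p))^3)"
      by (intro sum.cong) (auto simp: scale_patch_def)
    ultimately show ?thesis
      using sum.remove[OF finite_atLeastAtMost s, of "\<lambda>p. (inner_d d (W r) (scale_patch s c x p))^3"]
      by (simp add: distrib_left)
  qed
  then show ?thesis
    unfolding fnet_eq_sum_cubes sum_distrib_left by (simp add: sum.distrib)
qed

lemma grad_entry_scale_patch_signal:
  assumes y: "y \<in> {-1, 1}" and s: "s \<in> {1..P}" and d: "1 \<le> d" and r: "r \<in> {1..m}"
    and xs: "x s = (\<lambda>j. \<alpha> * y * unit_vec 1 j)"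
    and noise: "\<forall>p\<in>{1..P}. p \<noteq> s \<longrightarrow> x p 1 = 0"
  shows "grad_entry m P d W y (scale_patch s c x) r 1
       = - 3 * psi (y * fnet m P d W (scale_patch s c x)) * (1 + c)^3 * \<alpha>^3 * (W r 1)^2"
proof -
  have "(\<Sum>p=1..P. 3 * (inner_d d (W r) (scale_patch s c x p))^2 * scale_patch s c x p 1)
      = 3 * ((1 + c) * (\<alpha> * y * W r 1))^2 * ((1 + c) * (\<alpha> * y))"
  proof -
    have "(\<Sum>p\<in>{1..P}-{s}. 3 * (inner_d d (W r) (scale_patch s c x p))^2 * scale_patch s c x p 1) = 0"
      using noise by (intro sum.neutral) (auto simp: scale_patch_def)
    moreover have "scale_patch s c x s 1 = (1 + c) * (\<alpha> * y)"
      by (simp add: scale_patch_def xs unit_vec_def algebra_simps)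
    moreover have "inner_d d (W r) (scale_patch s c x s) = (1 + c) * (\<alpha> * y * W r 1)"
      using d by (simp add: scale_patch_def inner_d_scale xs inner_d_unit_vec)
    ultimately show ?thesis
      using sum.remove[OF finite_atLeastAtMost s,
          of "\<lambda>p. 3 * (inner_d d (W r) (scale_patch s c x p))^2 * scale_patch s c x p 1"]
      by simp
  qed
  moreover have "y * (3 * ((1 + c) * (\<alpha> * y * W r 1))^2 * ((1 + c) * (\<alpha> * y)))
      = 3 * (1 + c)^3 * \<alpha>^3 * (W r 1)^2"
    using y by (auto simp: power_mult_distrib power2_eq_square power3_eq_cube)
  ultimately show ?thesis using grad_entry_eq[of 1 d r m P W y] d r by simp
qed

lemma grad_entry_scale_patch_orthogonal:
  assumes s: "s \<in> {1..P}" and d: "2 \<le> d" and r: "r \<in> {1..m}"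
    and xs: "x s = (\<lambda>j. \<alpha> * y * unit_vec d j)"
    and noise: "\<forall>p\<in>{1..P}. p \<noteq> s \<longrightarrow> x p 1 = 0"
  shows "grad_entry m P d W y (scale_patch s c x) r 1 = 0"
proof -
  have "(\<Sum>p=1..P. 3 * (inner_d d (W r) (scale_patch s c x p))^2 * scale_patch s c x p 1) = 0"
    using noise xs d by (intro sum.neutral) (auto simp: unit_vec_def scale_patch_def)
  thus ?thesis using grad_entry_eq[of 1 d r m P W y] d r by simp
qed

section \<open>Dynamics of adversarial training\<close>

locale adversarial_training =
  fixes N P d m :: nat and \<alpha> \<eta> \<epsilon> :: real and SL SU :: "nat set"
    and y :: "nat \<Rightarrow> real" and s :: "nat \<Rightarrow> nat" and x :: "nat \<Rightarrow> nat \<Rightarrow> nat \<Rightarrow> real"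
    and W :: "nat \<Rightarrow> nat \<Rightarrow> nat \<Rightarrow> real" and Xt :: "nat \<Rightarrow> nat \<Rightarrow> nat \<Rightarrow> nat \<Rightarrow> real"
  assumes alpha_pos: "0 < \<alpha>" and eta_pos: "0 < \<eta>" and eps_pos: "0 < \<epsilon>"
    and eps_le_half_alpha: "\<epsilon> / \<alpha> \<le> 1/2"
    and two_le_d: "2 \<le> d"
    and partition: "SL \<union> SU = {1..N}" "SL \<inter> SU = {}"
    and data: "\<forall>i\<in>{1..N}. y i \<in> {-1, 1} \<and> s i \<in> {1..P}
        \<and> x i (s i) = (\<lambda>j. \<alpha> * y i * (if i \<in> SL then unit_vec 1 j else unit_vec d j))
        \<and> (\<forall>p\<in>{1..P}. p \<noteq> s i \<longrightarrow> x i p 1 = 0 \<and> x i p d = 0)"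
    and adversarial: "\<forall>\<tau> i. i \<in> {1..N} \<longrightarrow> Xt \<tau> i \<in> adm_set d \<epsilon> (s i) (x i)
        \<and> (\<forall>X' \<in> adm_set d \<epsilon> (s i) (x i).
              logloss (y i * fnet m P d (W \<tau>) X') \<le> logloss (y i * fnet m P d (W \<tau>) (Xt \<tau> i)))"
    and gradient_step: "\<forall>\<tau>. \<forall>r\<in>{1..m}. \<forall>j\<in>{1..d}.
        W (Suc \<tau>) r j = (if j = d then 0 else
           W \<tau> r j - \<eta> / N * (\<Sum>i=1..N. grad_entry m P d (W \<tau>) (y i) (Xt \<tau> i) r j))"
begin

definition margin :: "nat \<Rightarrow> nat \<Rightarrow> real" where
  "margin \<tau> k = y k * fnet m P d (W \<tau>) (Xt \<tau> k)"

definition signal :: "nat \<Rightarrow> real" where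
  "signal \<tau> = (\<Sum>r=1..m. (W \<tau> r 1)^3)"

definition noise_margin :: "nat \<Rightarrow> nat \<Rightarrow> real" where
  "noise_margin \<tau> k = y k * (\<Sum>r=1..m. \<Sum>p\<in>{1..P}-{s k}. (inner_d d (W \<tau> r) (x k p))^3)"

lemma one_sub_eps_ratio_pos: "0 < 1 - \<epsilon> / \<alpha>"
  using eps_le_half_alpha by linarith

lemma learnable_data:
  assumes "k \<in> SL"
  shows "y k \<in> {-1, 1}" "s k \<in> {1..P}" "x k (s k) = (\<lambda>j. \<alpha> * y k * unit_vec 1 j)"
    "\<forall>p\<in>{1..P}. p \<noteq> s k \<longrightarrow> x k p 1 = 0"
proof -
  have "k \<in> {1..N}" using assms partition by auto
  with data assms show "y k \<in> {-1, 1}" "s k \<in> {1..P}" "x k (s k) = (\<lambda>j. \<alpha> * y k * unit_vec 1 j)"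
    "\<forall>p\<in>{1..P}. p \<noteq> s k \<longrightarrow> x k p 1 = 0"
    by auto
qed

lemma adversarial_learnable_scaled:
  assumes k: "k \<in> SL"
  obtains c where "\<bar>c\<bar> \<le> \<epsilon> / \<alpha>" "Xt \<tau> k = scale_patch (s k) c (x k)"
proof -
  have "k \<in> {1..N}" using k partition by auto
  then have "Xt \<tau> k \<in> adm_set d \<epsilon> (s k) (x k)" using adversarial by blast
  then obtain c where c: "Xt \<tau> k = scale_patch (s k) c (x k)" "\<bar>c * x k (s k) 1\<bar> \<le> \<epsilon>"
    using two_le_d unfolding mem_adm_set_iff by auto
  then have "\<bar>c\<bar> * \<alpha> \<le> \<epsilon>"
    using learnable_data[OF k] alpha_pos by (auto simp: unit_vec_def abs_mult)
  with c that show ?thesis using alpha_pos by (simp add: pos_le_divide_eq)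
qed

lemma margin_and_grad_learnable:
  assumes k: "k \<in> SL"
  obtains c where "\<bar>c\<bar> \<le> \<epsilon> / \<alpha>"
    "margin \<tau> k = (1 + c)^3 * \<alpha>^3 * signal \<tau> + noise_margin \<tau> k"
    "\<And>r. r \<in> {1..m} \<Longrightarrow> grad_entry m P d (W \<tau>) (y k) (Xt \<tau> k) r 1
        = - 3 * psi (margin \<tau> k) * (1 + c)^3 * \<alpha>^3 * (W \<tau> r 1)^2"
proof -
  obtain c where c: "\<bar>c\<bar> \<le> \<epsilon> / \<alpha>" and X: "Xt \<tau> k = scale_patch (s k) c (x k)"
    using adversarial_learnable_scaled[OF k] .
  have d1: "1 \<le> d" using two_le_d by simp
  show ?thesis
    using that[OF c] learnable_data[OF k]
      margin_scale_patch[of "y k" "s k" P d "x k" \<alpha> m "W \<tau>" c]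
      grad_entry_scale_patch_signal[of "y k" "s k" P d _ m "x k" \<alpha> "W \<tau>" c] d1
    unfolding margin_def signal_def noise_margin_def X by auto
qed

text \<open>The adversary may always shrink the signal patch by the full factor \<open>1 - \<epsilon>/\<alpha>\<close>; since it
  maximises the loss, the margin it produces is no larger.\<close>
lemma margin_le_worst_case:
  assumes k: "k \<in> SL"
  shows "margin \<tau> k \<le> (1 - \<epsilon> / \<alpha>)^3 * \<alpha>^3 * signal \<tau> + noise_margin \<tau> k"
proof -
  let ?X = "scale_patch (s k) (- (\<epsilon> / \<alpha>)) (x k)"
  have "\<bar>- (\<epsilon> / \<alpha>) * x k (s k) j\<bar> \<le> \<epsilon>" for j
    using learnable_data[OF k] alpha_pos eps_pos by (auto simp: unit_vec_def abs_mult)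
  then have "?X \<in> adm_set d \<epsilon> (s k) (x k)" unfolding mem_adm_set_iff by blast
  moreover have "k \<in> {1..N}" using k partition by auto
  ultimately have "logloss (y k * fnet m P d (W \<tau>) ?X) \<le> logloss (margin \<tau> k)"
    using adversarial unfolding margin_def by blast
  then have "margin \<tau> k \<le> y k * fnet m P d (W \<tau>) ?X"
    by (simp only: logloss_le_logloss_iff)
  also have "\<dots> = (1 - \<epsilon> / \<alpha>)^3 * \<alpha>^3 * signal \<tau> + noise_margin \<tau> k"
    using learnable_data[OF k] margin_scale_patch[of "y k" "s k" P d "x k" \<alpha> m "W \<tau>"] two_le_d
    by (simp add: signal_def noise_margin_def)
  finally show ?thesis .
qed

lemma grad_unlearnable:
  assumes k: "k \<in> SU" and r: "r \<in> {1..m}"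
  shows "grad_entry m P d (W \<tau>) (y k) (Xt \<tau> k) r 1 = 0"
proof -
  have kN: "k \<in> {1..N}" and kL: "k \<notin> SL" using k partition by auto
  then obtain c where "Xt \<tau> k = scale_patch (s k) c (x k)"
    using adversarial unfolding mem_adm_set_iff by blast
  then show ?thesis
    using grad_entry_scale_patch_orthogonal[of "s k" P d r m "x k" \<alpha> "y k" "W \<tau>" c] data kN kL r two_le_d
    by auto
qed

lemma signal_coord_step:
  assumes r: "r \<in> {1..m}"
  shows "W (Suc \<tau>) r 1 = W \<tau> r 1 - \<eta> / N * (\<Sum>k\<in>SL. grad_entry m P d (W \<tau>) (y k) (Xt \<tau> k) r 1)"
proof -
  have fin: "finite SL" "finite SU" using partition(1) finite_subset[of _ "{1..N}"] by auto
  have "(\<Sum>k\<in>SU. grad_entry m P d (W \<tau>) (y k) (Xt \<tau> k) r 1) = 0"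
    using grad_unlearnable[OF _ r] by simp
  then have "(\<Sum>k=1..N. grad_entry m P d (W \<tau>) (y k) (Xt \<tau> k) r 1)
      = (\<Sum>k\<in>SL. grad_entry m P d (W \<tau>) (y k) (Xt \<tau> k) r 1)"
    unfolding partition(1)[symmetric] sum.union_disjoint[OF fin partition(2)] by simp
  then show ?thesis using gradient_step r two_le_d by auto
qed

lemma signal_coord_increment_bounds:
  fixes \<tau> :: nat
  assumes r: "r \<in> {1..m}"
  defines "\<Psi> \<equiv> \<eta> / N * (\<Sum>k\<in>SL. 3 * psi (margin \<tau> k)) * \<alpha>^3 * (W \<tau> r 1)^2"
  shows "(1 - \<epsilon> / \<alpha>)^3 * \<Psi> \<le> W (Suc \<tau>) r 1 - W \<tau> r 1"
    and "W (Suc \<tau>) r 1 - W \<tau> r 1 \<le> (1 + \<epsilon> / \<alpha>)^3 * \<Psi>"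
proof -
  define G where "G k = - grad_entry m P d (W \<tau>) (y k) (Xt \<tau> k) r 1" for k
  define K where "K k = 3 * psi (margin \<tau> k) * \<alpha>^3 * (W \<tau> r 1)^2" for k
  have G: "(1 - \<epsilon> / \<alpha>)^3 * K k \<le> G k \<and> G k \<le> (1 + \<epsilon> / \<alpha>)^3 * K k" if k: "k \<in> SL" for k
  proof -
    obtain c where c: "\<bar>c\<bar> \<le> \<epsilon> / \<alpha>"
      and "margin \<tau> k = (1 + c)^3 * \<alpha>^3 * signal \<tau> + noise_margin \<tau> k"
      and g: "\<And>r. r \<in> {1..m} \<Longrightarrow> grad_entry m P d (W \<tau>) (y k) (Xt \<tau> k) r 1
        = - 3 * psi (margin \<tau> k) * (1 + c)^3 * \<alpha>^3 * (W \<tau> r 1)^2"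
      using margin_and_grad_learnable[OF k, where \<tau> = \<tau>] by blast
    have "G k = (1 + c)^3 * K k"
      unfolding G_def K_def g[OF r] by (simp add: algebra_simps)
    moreover have "(1 - \<epsilon> / \<alpha>)^3 \<le> (1 + c)^3" "(1 + c)^3 \<le> (1 + \<epsilon> / \<alpha>)^3"
      using c eps_le_half_alpha by (intro power_mono; linarith)+
    moreover have "0 \<le> K k"
      using psi_pos[of "margin \<tau> k"] alpha_pos by (simp add: K_def)
    ultimately show ?thesis by (simp add: mult_right_mono)
  qed
  have "(1 - \<epsilon> / \<alpha>)^3 * (\<Sum>k\<in>SL. K k) \<le> (\<Sum>k\<in>SL. G k)"
    "(\<Sum>k\<in>SL. G k) \<le> (1 + \<epsilon> / \<alpha>)^3 * (\<Sum>k\<in>SL. K k)"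
    using G by (auto simp: sum_distrib_left intro: sum_mono)
  moreover have "W (Suc \<tau>) r 1 - W \<tau> r 1 = \<eta> / N * (\<Sum>k\<in>SL. G k)"
    using signal_coord_step[OF r] by (simp add: G_def sum_negf)
  moreover have "\<Psi> = \<eta> / N * (\<Sum>k\<in>SL. K k)"
    unfolding \<Psi>_def K_def by (simp add: sum_distrib_right mult.assoc)
  moreover have "0 \<le> \<eta> / N" using eta_pos by simp
  ultimately show "(1 - \<epsilon> / \<alpha>)^3 * \<Psi> \<le> W (Suc \<tau>) r 1 - W \<tau> r 1"
    "W (Suc \<tau>) r 1 - W \<tau> r 1 \<le> (1 + \<epsilon> / \<alpha>)^3 * \<Psi>"
    by (metis mult_left_mono mult.left_commute)+
qed

lemma signal_coord_mono:
  assumes r: "r \<in> {1..m}" and "\<tau> \<le> \<tau>'"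
  shows "W \<tau> r 1 \<le> W \<tau>' r 1"
proof -
  have "W \<tau> r 1 \<le> W (Suc \<tau>) r 1" for \<tau>
  proof -
    have "0 \<le> (1 - \<epsilon> / \<alpha>)^3 * (\<eta> / N * (\<Sum>k\<in>SL. 3 * psi (margin \<tau> k)) * \<alpha>^3 * (W \<tau> r 1)^2)"
      using eps_le_half_alpha eta_pos alpha_pos psi_pos[THEN less_imp_le]
      by (intro zero_le_power2 mult_nonneg_nonneg zero_le_power divide_nonneg_nonneg sum_nonneg) auto
    then show ?thesis using signal_coord_increment_bounds(1)[OF r, of \<tau>] by linarith
  qed
  then show ?thesis using lift_Suc_mono_le[of "\<lambda>\<tau>. W \<tau> r 1"] assms(2) by blast
qed

lemma signal_mono: "\<tau> \<le> \<tau>' \<Longrightarrow> signal \<tau> \<le> signal \<tau>'"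
  unfolding signal_def by (intro sum_mono power_mono_odd signal_coord_mono) auto

end

locale adversarial_training_after_threshold = adversarial_training +
  fixes C0 \<iota> :: real and T0 t :: nat
  assumes one_le_m: "1 \<le> m" and C0_pos: "0 < C0"
    and learnable_majority: "real N \<le> 2 * real (card SL)"
    and init_lower: "\<forall>r\<in>{1..m}. - \<iota> \<le> W 0 r 1" and iota_nonneg: "0 \<le> \<iota>"
    and iota_small: "m * \<iota>^3 \<le> (C0 / (\<alpha> * m powr (1/3)))^3 / 2"
    and threshold_crossed: "Max ((\<lambda>r. W T0 r 1) ` {1..m}) > C0 / (\<alpha> * m powr (1/3))"
    and T0_less_t: "T0 < t"
    and noise_small: "\<forall>\<tau>\<le>t. \<forall>k\<in>SL. \<bar>noise_margin \<tau> k\<bar> \<le> 1"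
    and eta_small: "\<eta> * \<alpha>^2 \<le> 1/486"
begin

definition leader :: nat where
  "leader = (SOME r. r \<in> {1..m} \<and> W T0 r 1 = Max ((\<lambda>r. W T0 r 1) ` {1..m}))"

lemma leader: "leader \<in> {1..m}" "W T0 leader 1 = Max ((\<lambda>r. W T0 r 1) ` {1..m})"
proof -
  have "Max ((\<lambda>r. W T0 r 1) ` {1..m}) \<in> (\<lambda>r. W T0 r 1) ` {1..m}"
    using one_le_m by (intro Max_in) auto
  then have "\<exists>r. r \<in> {1..m} \<and> W T0 r 1 = Max ((\<lambda>r. W T0 r 1) ` {1..m})" by force
  from someI_ex[OF this] show "leader \<in> {1..m}" "W T0 leader 1 = Max ((\<lambda>r. W T0 r 1) ` {1..m})"
    unfolding leader_def by auto
qed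

lemma threshold_pos: "0 < C0 / (\<alpha> * m powr (1/3))"
  using C0_pos alpha_pos one_le_m by simp

lemma leader_above_threshold:
  assumes "T0 \<le> \<tau>"
  shows "C0 / (\<alpha> * m powr (1/3)) < W \<tau> leader 1"
  using threshold_crossed leader(2) signal_coord_mono[OF leader(1) assms] by linarith

lemma signal_ge_half_leader_cube:
  assumes "T0 \<le> \<tau>"
  shows "(W \<tau> leader 1)^3 / 2 \<le> signal \<tau>"
proof -
  have "- (\<iota>^3) \<le> (W \<tau> r 1)^3" if "r \<in> {1..m}" for r
  proof -
    have "- \<iota> \<le> W \<tau> r 1" using init_lower signal_coord_mono[OF that, of 0 \<tau>] that by force
    then have "(- \<iota>)^3 \<le> (W \<tau> r 1)^3" by (intro power_mono_odd) auto
    then show ?thesis by simp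
  qed
  then have "(\<Sum>r\<in>{1..m}-{leader}. - (\<iota>^3)) \<le> (\<Sum>r\<in>{1..m}-{leader}. (W \<tau> r 1)^3)"
    by (intro sum_mono) auto
  moreover have "(\<Sum>r\<in>{1..m}-{leader}. - (\<iota>^3)) = - (real (m - 1) * \<iota>^3)"
    using leader(1) by simp
  moreover have "real (m - 1) * \<iota>^3 \<le> m * \<iota>^3"
    using iota_nonneg one_le_m by (intro mult_right_mono) auto
  moreover have "(C0 / (\<alpha> * m powr (1/3)))^3 \<le> (W \<tau> leader 1)^3"
    using leader_above_threshold[OF assms] threshold_pos by (intro power_mono) auto
  moreover have "signal \<tau> = (W \<tau> leader 1)^3 + (\<Sum>r\<in>{1..m}-{leader}. (W \<tau> r 1)^3)"
    unfolding signal_def using sum.remove[OF _ leader(1)] by simp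
  ultimately show ?thesis using iota_small by linarith
qed

lemma signal_nonneg:
  assumes "T0 \<le> \<tau>"
  shows "0 \<le> signal \<tau>"
proof -
  have "0 < W \<tau> leader 1" using leader_above_threshold[OF assms] threshold_pos by linarith
  then have "0 \<le> (W \<tau> leader 1)^3 / 2" by simp
  then show ?thesis using signal_ge_half_leader_cube[OF assms] by linarith
qed

lemma margin_near_worst_case:
  assumes k: "k \<in> SL" and "T0 \<le> \<tau>" "\<tau> \<le> t"
  shows "\<bar>margin \<tau> k - (1 - \<epsilon> / \<alpha>)^3 * \<alpha>^3 * signal \<tau>\<bar> \<le> 1"
proof -
  obtain c where c: "\<bar>c\<bar> \<le> \<epsilon> / \<alpha>"
    and M: "margin \<tau> k = (1 + c)^3 * \<alpha>^3 * signal \<tau> + noise_margin \<tau> k"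
    using margin_and_grad_learnable[OF k, where \<tau> = \<tau>] by blast
  have "(1 - \<epsilon> / \<alpha>)^3 \<le> (1 + c)^3"
    using c eps_le_half_alpha by (intro power_mono; linarith)
  then have "(1 - \<epsilon> / \<alpha>)^3 * \<alpha>^3 * signal \<tau> \<le> (1 + c)^3 * \<alpha>^3 * signal \<tau>"
    using alpha_pos signal_nonneg[OF assms(2)] by (intro mult_right_mono) auto
  moreover have "\<bar>noise_margin \<tau> k\<bar> \<le> 1" using noise_small assms by blast
  ultimately show ?thesis
    using M margin_le_worst_case[OF k, of \<tau>] unfolding abs_le_iff by linarith
qed

lemma psi_margin_comparable:
  assumes "i \<in> SL" "k \<in> SL" "T0 \<le> \<tau>" "\<tau> \<le> t"
  shows "psi (margin \<tau> i) \<le> 9 * psi (margin \<tau> k)"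
proof -
  have "margin \<tau> k \<le> margin \<tau> i + 2"
    using margin_near_worst_case[of i \<tau>] margin_near_worst_case[of k \<tau>] assms by linarith
  then have "psi (margin \<tau> i + 2) \<le> psi (margin \<tau> k)" by (rule psi_antimono)
  have "psi (margin \<tau> i) \<le> exp 2 * psi (margin \<tau> i + 2)" by (rule psi_le_exp_mult_psi_add) simp
  also have "\<dots> \<le> exp 2 * psi (margin \<tau> k)" using \<open>psi (margin \<tau> i + 2) \<le> psi (margin \<tau> k)\<close> by simp
  also have "\<dots> \<le> 9 * psi (margin \<tau> k)"
    using exp_two_le_nine psi_pos[of "margin \<tau> k"] by (intro mult_right_mono) auto
  finally show ?thesis .
qed

lemma leader_growth_lower:
  assumes i: "i \<in> SL" and "T0 \<le> \<tau>" "\<tau> < t"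
  shows "W \<tau> leader 1 + \<eta> * \<alpha>^3 * (1 - \<epsilon> / \<alpha>)^3 / 6 * (W \<tau> leader 1)^2 * psi (margin \<tau> i)
    \<le> W (Suc \<tau>) leader 1"
proof -
  have "\<eta> / 6 * psi (margin \<tau> i) \<le> \<eta> / N * (card SL * (psi (margin \<tau> i) / 3))"
  proof -
    have N: "0 < real N" using partition(1) i by fastforce
    have "\<eta> * (real N * psi (margin \<tau> i)) \<le> \<eta> * (2 * card SL * psi (margin \<tau> i))"
      using learnable_majority eta_pos psi_pos[of "margin \<tau> i"] by (intro mult_left_mono mult_right_mono) auto
    then show ?thesis using N by (simp add: field_simps)
  qed
  also have "\<dots> \<le> \<eta> / N * (\<Sum>k\<in>SL. 3 * psi (margin \<tau> k))"
    using psi_margin_comparable[OF i _ assms(2)] assms(3) sum_mono[of SL "\<lambda>_. psi (margin \<tau> i) / 3"]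
      eta_pos by (intro mult_left_mono) fastforce+
  finally have "\<eta> / 6 * psi (margin \<tau> i) \<le> \<eta> / N * (\<Sum>k\<in>SL. 3 * psi (margin \<tau> k))" .
  then have "(1 - \<epsilon> / \<alpha>)^3 * (\<eta> / 6 * psi (margin \<tau> i) * \<alpha>^3 * (W \<tau> leader 1)^2)
      \<le> (1 - \<epsilon> / \<alpha>)^3 * (\<eta> / N * (\<Sum>k\<in>SL. 3 * psi (margin \<tau> k)) * \<alpha>^3 * (W \<tau> leader 1)^2)"
    using one_sub_eps_ratio_pos alpha_pos
    by (intro mult_left_mono mult_right_mono zero_le_power2 zero_le_power) auto
  moreover have "\<eta> * \<alpha>^3 * (1 - \<epsilon> / \<alpha>)^3 / 6 * (W \<tau> leader 1)^2 * psi (margin \<tau> i)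
      = (1 - \<epsilon> / \<alpha>)^3 * (\<eta> / 6 * psi (margin \<tau> i) * \<alpha>^3 * (W \<tau> leader 1)^2)"
    by (simp add: algebra_simps)
  ultimately show ?thesis
    using signal_coord_increment_bounds(1)[OF leader(1), of \<tau>] by linarith
qed

lemma psi_margin_le_exp_leader:
  assumes k: "k \<in> SL" and "T0 \<le> \<tau>" "\<tau> \<le> t"
  shows "psi (margin \<tau> k) \<le> 3 * exp (- ((\<alpha> * W \<tau> leader 1)^3 / 16))"
proof -
  have "(1/2)^3 \<le> (1 - \<epsilon> / \<alpha>)^3" using eps_le_half_alpha by (intro power_mono) auto
  then have "(1/2)^3 * (\<alpha>^3 * ((W \<tau> leader 1)^3 / 2)) \<le> (1 - \<epsilon> / \<alpha>)^3 * (\<alpha>^3 * signal \<tau>)"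
    using signal_ge_half_leader_cube[OF assms(2)] leader_above_threshold[OF assms(2)] threshold_pos alpha_pos
      eps_le_half_alpha
    by (intro mult_mono) auto
  moreover have "(1/2)^3 * (\<alpha>^3 * ((W \<tau> leader 1)^3 / 2)) = (\<alpha> * W \<tau> leader 1)^3 / 16"
    by (simp add: power3_eq_cube)
  ultimately have "(\<alpha> * W \<tau> leader 1)^3 / 16 - 1 \<le> margin \<tau> k"
    using margin_near_worst_case[OF assms] unfolding abs_le_iff mult.assoc by linarith
  then have "psi (margin \<tau> k) \<le> exp (- ((\<alpha> * W \<tau> leader 1)^3 / 16 - 1))"
    using psi_antimono psi_le_exp_neg order_trans by blast
  also have "\<dots> = exp 1 * exp (- ((\<alpha> * W \<tau> leader 1)^3 / 16))" by (simp flip: exp_add)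
  also have "\<dots> \<le> 3 * exp (- ((\<alpha> * W \<tau> leader 1)^3 / 16))" using exp_le by simp
  finally show ?thesis .
qed

text \<open>With \<open>w = \<alpha> w\<^sub>r\<^sub>1\<close> the increment is of order \<open>\<eta> \<alpha>\<^sup>2 w\<^sub>r\<^sub>1 \<cdot> w exp (-w\<^sup>3/16)\<close>,
  and \<open>w exp (-w\<^sup>3/16) \<le> 16\<close> uniformly.\<close>
lemma leader_growth_upper:
  assumes "T0 \<le> \<tau>" "\<tau> < t"
  shows "W (Suc \<tau>) leader 1 \<le> 2 * W \<tau> leader 1"
proof -
  define U where "U = W \<tau> leader 1"
  define E where "E = exp (- ((\<alpha> * U)^3 / 16))"
  have E: "0 \<le> E" by (simp add: E_def)
  have U: "0 < U" using leader_above_threshold[OF assms(1)] threshold_pos unfolding U_def by linarith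
  have "(\<Sum>k\<in>SL. 3 * psi (margin \<tau> k)) \<le> card SL * (9 * E)"
    using psi_margin_le_exp_leader assms sum_mono[of SL _ "\<lambda>_. 9 * E"] unfolding E_def U_def
    by fastforce
  also have "\<dots> \<le> N * (9 * E)"
    using card_mono[of "{1..N}" SL] partition(1) by (intro mult_right_mono) (auto simp: E_def)
  finally have "\<eta> / N * (\<Sum>k\<in>SL. 3 * psi (margin \<tau> k)) \<le> \<eta> * (9 * E)"
    using eta_pos E by (cases "N = 0") (auto simp: field_simps)
  then have rate: "\<eta> / N * (\<Sum>k\<in>SL. 3 * psi (margin \<tau> k)) * \<alpha>^3 * U^2 \<le> \<eta> * (9 * E) * \<alpha>^3 * U^2"
    using alpha_pos by (intro mult_right_mono) auto
  have factor: "(1 + \<epsilon> / \<alpha>)^3 \<le> (3/2)^3"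
    using eps_le_half_alpha eps_pos alpha_pos by (intro power_mono) auto
  have "0 \<le> \<eta> / N * (\<Sum>k\<in>SL. 3 * psi (margin \<tau> k)) * \<alpha>^3 * U^2"
    using eta_pos alpha_pos psi_pos[THEN less_imp_le]
    by (intro zero_le_power2 mult_nonneg_nonneg zero_le_power divide_nonneg_nonneg sum_nonneg) auto
  then have "(1 + \<epsilon> / \<alpha>)^3 * (\<eta> / N * (\<Sum>k\<in>SL. 3 * psi (margin \<tau> k)) * \<alpha>^3 * U^2)
      \<le> (3/2)^3 * (\<eta> * (9 * E) * \<alpha>^3 * U^2)"
    using mult_mono[OF factor rate] by simp
  then have "W (Suc \<tau>) leader 1 - U \<le> (3/2)^3 * (\<eta> * (9 * E) * \<alpha>^3 * U^2)"
    using signal_coord_increment_bounds(2)[OF leader(1), of \<tau>] unfolding U_def by linarith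
  also have "\<dots> = 243/8 * (\<eta> * \<alpha>^2) * U * ((\<alpha> * U) * E)"
    by (simp add: power2_eq_square power3_eq_cube)
  also have "\<dots> \<le> 243/8 * (1/486) * U * 16"
    using mult_exp_neg_cube_le[of "\<alpha> * U"] eta_small eta_pos alpha_pos U
    unfolding E_def by (intro mult_mono) auto
  finally show ?thesis unfolding U_def by simp
qed

lemma psi_margin_sum_le:
  assumes i: "i \<in> SL"
  shows "(\<Sum>\<tau>=T0..<t. psi (margin \<tau> i)) \<le> 12 * m powr (1/3) / (C0 * (1 - \<epsilon> / \<alpha>)^3 * \<eta> * \<alpha>^2)"
proof -
  define q where "q = (1 - \<epsilon> / \<alpha>)^3"
  define k where "k = \<eta> * \<alpha>^3 * q / 6"
  have q: "0 < q" using one_sub_eps_ratio_pos by (simp add: q_def)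
  have k: "0 < k" using eta_pos alpha_pos q by (simp add: k_def)
  have A: "0 < C0 / (\<alpha> * m powr (1/3))" "C0 / (\<alpha> * m powr (1/3)) < W T0 leader 1"
    using leader_above_threshold[of T0] threshold_pos by auto
  have "(\<Sum>\<tau>=T0..<t. psi (margin \<tau> i)) \<le> 2 / (k * W T0 leader 1)"
    using leader_above_threshold[of T0] threshold_pos leader_growth_lower[OF i] leader_growth_upper T0_less_t
      one_sub_eps_ratio_pos
    by (intro sum_le_of_reciprocal_growth[OF k]) (auto simp: k_def q_def less_imp_le psi_pos)
  also have "\<dots> \<le> 2 / (k * (C0 / (\<alpha> * m powr (1/3))))"
    using A k by (intro divide_left_mono mult_left_mono mult_pos_pos) auto
  also have "\<dots> = 12 * m powr (1/3) / (C0 * q * \<eta> * \<alpha>^2)"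
    unfolding k_def using alpha_pos by (simp add: field_simps power2_eq_square power3_eq_cube)
  finally show ?thesis unfolding q_def .
qed

lemma psi_margin_last_le:
  assumes i: "i \<in> SL"
  shows "psi (margin t i) * (t - T0) \<le> 9 * (\<Sum>\<tau>=T0..<t. psi (margin \<tau> i))"
proof -
  have "psi (margin t i) \<le> 9 * psi (margin \<tau> i)" if "T0 \<le> \<tau>" "\<tau> < t" for \<tau>
  proof -
    have "(1 - \<epsilon> / \<alpha>)^3 * \<alpha>^3 * signal \<tau> \<le> (1 - \<epsilon> / \<alpha>)^3 * \<alpha>^3 * signal t"
      using signal_mono[of \<tau> t] that eps_le_half_alpha alpha_pos by (intro mult_left_mono) auto
    then have "margin \<tau> i - 2 \<le> margin t i"
      using margin_near_worst_case[OF i, of \<tau>] margin_near_worst_case[OF i, of t] that T0_less_t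
      by (simp add: abs_le_iff)
    then have "psi (margin t i) \<le> psi (margin \<tau> i - 2)" by (rule psi_antimono)
    also have "\<dots> \<le> exp 2 * psi (margin \<tau> i)" using psi_le_exp_mult_psi_add[of 2 "margin \<tau> i - 2"] by simp
    also have "\<dots> \<le> 9 * psi (margin \<tau> i)"
      using exp_two_le_nine psi_pos[of "margin \<tau> i"] by (intro mult_right_mono) auto
    finally show ?thesis .
  qed
  then have "(\<Sum>\<tau>=T0..<t. psi (margin t i)) \<le> (\<Sum>\<tau>=T0..<t. 9 * psi (margin \<tau> i))"
    by (intro sum_mono) auto
  moreover have "(\<Sum>\<tau>=T0..<t. psi (margin t i)) = psi (margin t i) * (t - T0)" by simp
  ultimately show ?thesis by (simp add: sum_distrib_left mult.commute)
qed

lemma psi_margin_bounds: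
  assumes i: "i \<in> SL" and L: "30 * C0 \<le> L"
  shows "(\<Sum>\<tau>=T0..<t. psi (margin \<tau> i))
          \<le> 2 * m powr (2/3) * L / (C0^2 * (1 - \<epsilon> / \<alpha>)^3 * \<eta> * \<alpha>^2)"
    and "psi (margin t i)
          \<le> 4 * m powr (2/3) * L / (C0^2 * (1 - \<epsilon> / \<alpha>)^3 * \<eta> * \<alpha>^2 * (t - T0))"
proof -
  define Q where "Q = (1 - \<epsilon> / \<alpha>)^3 * \<eta> * \<alpha>^2"
  have Q: "0 < Q" using one_sub_eps_ratio_pos eta_pos alpha_pos by (simp add: Q_def)
  have m13: "1 \<le> m powr (1/3)" using one_le_m by (simp add: ge_one_powr_ge_zero)
  have m23: "m powr (2/3) = (m powr (1/3))^2" using powr_power[of "real m" "1/3" 2] one_le_m by simp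
  have "c * m powr (1/3) / (C0 * Q) \<le> b * m powr (2/3) * L / (C0^2 * Q)"
    if "c \<le> 30 * b" "0 \<le> b" for b c :: real
  proof -
    have "c * (m powr (1/3) * C0) \<le> 30 * b * (m powr (1/3) * C0)"
      using that C0_pos m13 by (intro mult_right_mono) auto
    then have "c * m powr (1/3) * C0 \<le> b * (30 * C0) * m powr (1/3)"
      by (simp add: algebra_simps)
    also have "\<dots> \<le> b * L * (m powr (1/3) * m powr (1/3))"
      using that L m13 C0_pos mult_left_mono[OF m13, of "m powr (1/3)"] by (intro mult_mono) auto
    finally show ?thesis
      using C0_pos Q by (simp add: m23 power2_eq_square field_simps)
  qed
  note scale = this
  have sum: "(\<Sum>\<tau>=T0..<t. psi (margin \<tau> i)) \<le> 12 * m powr (1/3) / (C0 * Q)"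
    using psi_margin_sum_le[OF i] by (simp add: Q_def mult.assoc)
  then show "(\<Sum>\<tau>=T0..<t. psi (margin \<tau> i))
      \<le> 2 * m powr (2/3) * L / (C0^2 * (1 - \<epsilon> / \<alpha>)^3 * \<eta> * \<alpha>^2)"
    using scale[of 12 2] by (simp add: Q_def mult.assoc)
  have "psi (margin t i) * (t - T0) \<le> 108 * m powr (1/3) / (C0 * Q)"
    using psi_margin_last_le[OF i] sum by simp
  also have "\<dots> \<le> 4 * m powr (2/3) * L / (C0^2 * Q)" using scale[of 108 4] by simp
  finally have "psi (margin t i) \<le> 4 * m powr (2/3) * L / (C0^2 * Q * (t - T0))"
    using T0_less_t Q C0_pos by (simp add: field_simps)
  then show "psi (margin t i)
      \<le> 4 * m powr (2/3) * L / (C0^2 * (1 - \<epsilon> / \<alpha>)^3 * \<eta> * \<alpha>^2 * (t - T0))"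
    by (simp add: Q_def mult.assoc)
qed

end

section \<open>Consequences of the standing conditions\<close>

locale standing_conditions =
  fixes C C0 :: real and N P d m T :: nat and \<alpha> sn s0 \<eta> \<epsilon> \<Gamma> \<delta> pun :: real
  assumes C_large: "10^12 \<le> C" and C_ge_exp: "exp (27000 * C0^3) \<le> C" and one_le_C0: "1 \<le> C0"
    and pos: "0 < \<alpha>" "0 < sn" "0 < s0" "0 < \<eta>" "0 < \<epsilon>" "0 < \<delta>" "\<delta> < 1"
    and std: "std_conditions C N P d m \<alpha> sn s0 \<eta> \<epsilon> \<Gamma> \<delta> T pun"
    and one_le_N: "1 \<le> N" and one_le_T: "1 \<le> T"
begin

definition La :: real where "La = ln (real T * real N * real m * real P / \<delta>)"
definition Lb :: real where "Lb = ln (real T * real d * real N * real m * real P / \<delta>)"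

lemma std_parts:
  shows T_ge: "C * N / (\<eta> * s0 * sn^3 * d powr (3/2)) \<le> T"
    and d_ge: "C * real m ^ 2 * real P ^ 2 * real N ^ 2 * La^4 \<le> d"
    and s0_le: "s0 \<le> 1/C * min (1 / (m powr (2/3) * P powr (2/3) * sn * sqrt d))
                 (min (1 / (\<alpha> * m powr (2/3))) (1 / (sn * real m ^ 2 * sqrt P * d))) / Lb"
    and eta_le: "\<eta> \<le> 1/C * min (1 / (\<alpha>^3 * s0)) (min (1 / (sn^2 * d)) (1 / \<alpha>^2)) / La"
    and eps_less: "\<epsilon> < 1/C * min \<alpha> (1 / (m * s0 * d))"
    and pun_cases: "pun = 0 \<or> (C / N \<le> pun \<and> pun \<le> 1/C * ln d / N)"
    and N_ge: "C * m * P * Lb \<le> N"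
    and m_ge: "C * ln (N * P / \<delta>) \<le> m"
    and two_le_P: "2 \<le> P" and P_le_C: "P \<le> C"
  using std unfolding std_conditions_def La_def Lb_def of_nat_mult by auto

lemma C_pos: "0 < C"
  using C_large by simp

lemma one_le_NP: "1 \<le> real N * real P"
  using one_le_N two_le_P by (intro one_le_mult) auto

lemma one_le_m: "1 \<le> m"
proof -
  have "1 < real N * real P / \<delta>"
    using one_le_NP pos(6,7) by (simp add: less_divide_eq)
  then have "0 < C * ln (N * P / \<delta>)" using C_pos by simp
  then show ?thesis using m_ge by simp
qed

lemma one_le_mP: "1 \<le> real m * real P"
  using one_le_m two_le_P by (intro one_le_mult) auto

lemma half_le_La: "1/2 \<le> La"
proof -
  have "1 \<le> real T * real N * real m" using one_le_T one_le_N one_le_m by (intro one_le_mult) auto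
  then have "1 * 2 \<le> real T * real N * real m * real P"
    using two_le_P by (intro mult_mono) auto
  also have "\<dots> \<le> real T * real N * real m * real P / \<delta>" using pos by (intro le_divide_of_le_one) auto
  finally show ?thesis unfolding La_def using exp_half_le2 by (subst ln_ge_iff) auto
qed

lemma d_pos: "0 < real d"
proof -
  have "0 < C * real m ^ 2 * real P ^ 2 * real N ^ 2 * La^4"
    using half_le_La C_pos one_le_m two_le_P one_le_N by simp
  then show ?thesis using d_ge by linarith
qed

lemma La_le_Lb: "La \<le> Lb"
proof -
  have "real T * real N * real m * real P \<le> real T * real d * real N * real m * real P"
    using d_pos mult_right_mono[of 1 "real d" "real T * real N * real m * real P"] by (simp add: algebra_simps)
  then have "real T * real N * real m * real P / \<delta> \<le> real T * real d * real N * real m * real P / \<delta>"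
    using pos by (simp add: divide_right_mono)
  moreover have "0 < real T * real N * real m * real P / \<delta>"
    using one_le_T one_le_N one_le_m two_le_P pos by simp
  ultimately show ?thesis unfolding La_def Lb_def by simp
qed

lemma La_pos: "0 < La" and Lb_pos: "0 < Lb"
  using half_le_La La_le_Lb by auto

lemma eta_le_inv: "\<eta> \<le> 1/C * (1 / (sn^2 * d)) / La" "\<eta> \<le> 1/C * (1 / \<alpha>^2) / La"
proof -
  have C: "0 \<le> 1/C" using C_pos by simp
  have "\<eta> \<le> 1/C * min (1 / (sn^2 * d)) (1 / \<alpha>^2) / La"
    using le_scaled_min(2)[OF eta_le C La_pos] .
  from le_scaled_min[OF this C La_pos]
  show "\<eta> \<le> 1/C * (1 / (sn^2 * d)) / La" "\<eta> \<le> 1/C * (1 / \<alpha>^2) / La" .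
qed

lemma s0_le_inv: "s0 \<le> 1/C * (1 / (m powr (2/3) * P powr (2/3) * sn * sqrt d)) / Lb"
    "s0 \<le> 1/C * (1 / (\<alpha> * m powr (2/3))) / Lb"
proof -
  have C: "0 \<le> 1/C" using C_pos by simp
  show "s0 \<le> 1/C * (1 / (m powr (2/3) * P powr (2/3) * sn * sqrt d)) / Lb"
    using le_scaled_min(1)[OF s0_le C Lb_pos] .
  have "s0 \<le> 1/C * min (1 / (\<alpha> * m powr (2/3))) (1 / (sn * real m ^ 2 * sqrt P * d)) / Lb"
    using le_scaled_min(2)[OF s0_le C Lb_pos] .
  from le_scaled_min(1)[OF this C Lb_pos] show "s0 \<le> 1/C * (1 / (\<alpha> * m powr (2/3))) / Lb" .
qed

lemma eta_sn_sq_d_le: "\<eta> * (sn^2 * d) \<le> 2 / C"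
proof -
  have "\<eta> * (sn^2 * d) \<le> 1/C * (1 / (sn^2 * d)) / La * (sn^2 * d)"
    using eta_le_inv(1) pos d_pos by (intro mult_right_mono) auto
  also have "\<dots> = 1 / (C * La)" using pos d_pos La_pos C_pos by (simp add: field_simps)
  also have "\<dots> \<le> 2 / C" using half_le_La C_pos by (simp add: field_simps)
  finally show ?thesis .
qed

lemma s0_sn_sqrt_d_le: "s0 * (sn * sqrt d) \<le> 2 / C"
proof -
  define q where "q = m powr (2/3) * P powr (2/3)"
  have "1 \<le> m powr (2/3)" "1 \<le> P powr (2/3)"
    using one_le_m two_le_P by (simp_all add: ge_one_powr_ge_zero)
  then have q: "1 \<le> q" unfolding q_def by (rule one_le_mult)
  have "s0 * (sn * sqrt d) \<le> 1/C * (1 / (q * sn * sqrt d)) / Lb * (sn * sqrt d)"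
    using s0_le_inv(1) pos d_pos unfolding q_def by (intro mult_right_mono) (auto simp: mult.assoc)
  also have "\<dots> = 1 / (C * q * Lb)" using pos d_pos Lb_pos C_pos q by (simp add: field_simps)
  also have "\<dots> \<le> 2 / C"
  proof -
    have "1 * (1/2) \<le> q * Lb" using q half_le_La La_le_Lb by (intro mult_mono) auto
    then show ?thesis using C_pos q Lb_pos by (simp add: field_simps)
  qed
  finally show ?thesis .
qed

lemma C_le_T: "C \<le> T"
proof -
  have "\<eta> * s0 * sn^3 * d powr (3/2) = (\<eta> * (sn^2 * d)) * (s0 * (sn * sqrt d))"
    using d_pos by (simp add: powr_half_sqrt power2_eq_square power3_eq_cube algebra_simps
        flip: powr_add[of d 1 "1/2", simplified])
  also have "\<dots> \<le> (2 / C) * (2 / C)"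
    using eta_sn_sq_d_le s0_sn_sqrt_d_le pos d_pos C_pos by (intro mult_mono) auto
  also have "\<dots> \<le> 1" using C_large mult_mono[of 2 C 2 C] by (simp add: field_simps)
  finally have "\<eta> * s0 * sn^3 * d powr (3/2) \<le> 1" .
  moreover have "0 < \<eta> * s0 * sn^3 * d powr (3/2)" using pos d_pos by simp
  ultimately have "C * N \<le> C * N / (\<eta> * s0 * sn^3 * d powr (3/2))"
    using C_pos by (intro le_divide_of_le_one) auto
  moreover have "C \<le> C * N" using C_pos one_le_N by simp
  ultimately show ?thesis using T_ge by linarith
qed

lemma ln_T_le_La: "ln T \<le> La"
proof -
  have "1 \<le> real N * (real m * real P)" using one_le_mult[OF _ one_le_mP, of "real N"] one_le_N by simp
  then have "real T \<le> real T * real N * real m * real P"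
    using mult_left_mono[of 1 "real N * (real m * real P)" "real T"] by (simp add: mult.assoc)
  also have "\<dots> \<le> real T * real N * real m * real P / \<delta>"
    using pos by (intro le_divide_of_le_one) (auto simp: mult.assoc)
  finally show ?thesis unfolding La_def using one_le_T by simp
qed

lemma ln_C_le_ln_T: "ln C \<le> ln T"
  using C_le_T C_pos by simp

lemma one_le_La: "1 \<le> La" and one_le_Lb: "1 \<le> Lb"
  using one_le_ln[of C] C_large ln_C_le_ln_T ln_T_le_La La_le_Lb by auto

lemma two_le_d: "2 \<le> d"
proof -
  have "1 \<le> real m ^ 2" "1 \<le> real P ^ 2" "1 \<le> real N ^ 2" "1 \<le> La ^ 4"
    using one_le_m two_le_P one_le_N one_le_La by (simp_all add: one_le_power)
  then have "1 \<le> real m ^ 2 * real P ^ 2 * real N ^ 2 * La ^ 4"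
    by (intro one_le_mult)
  then have "C \<le> C * real m ^ 2 * real P ^ 2 * real N ^ 2 * La ^ 4"
    using mult_left_mono[of 1 _ C] C_pos by (simp add: mult.assoc)
  moreover have "2 \<le> C" using C_large by simp
  ultimately have "2 \<le> real d" using d_ge by linarith
  then show ?thesis by simp
qed

lemma eta_alpha_sq_small: "\<eta> * \<alpha>^2 \<le> 1/486"
proof -
  have "\<eta> * \<alpha>^2 \<le> 1/C * (1 / \<alpha>^2) / La * \<alpha>^2"
    using eta_le_inv(2) pos by (intro mult_right_mono) auto
  also have "\<dots> = 1 / (C * La)" using pos La_pos C_pos by (simp add: field_simps)
  also have "\<dots> \<le> 1/486"
  proof -
    have "486 * 1 \<le> C * La" using one_le_La C_large by (intro mult_mono) auto
    then show ?thesis using C_pos La_pos by (simp add: field_simps)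
  qed
  finally show ?thesis .
qed

lemma eps_le_half_alpha: "\<epsilon> / \<alpha> \<le> 1/2"
proof -
  have "1/C * min \<alpha> (1 / (m * s0 * d)) \<le> 1/C * \<alpha>" using C_pos by (intro mult_left_mono) auto
  then have "\<epsilon> < 1/C * \<alpha>" using eps_less by linarith
  also have "\<dots> \<le> \<alpha> / 2" using C_large pos by (simp add: field_simps)
  finally show ?thesis using pos by (simp add: field_simps)
qed

lemma cube_root_ln_T_large: "30 * C0 \<le> ln T powr (1/3)"
proof -
  have "27000 * C0^3 \<le> ln C" using C_ge_exp C_pos by (simp add: ln_ge_iff)
  then have lnT: "(30 * C0)^3 \<le> ln T" using ln_C_le_ln_T by (simp add: power_mult_distrib)
  moreover have "0 < (30 * C0)^3" using one_le_C0 by simp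
  ultimately have "0 < ln T" by linarith
  then have "(ln T powr (1/3))^3 = ln T" using powr_power[of "ln T" "1/3" 3] by simp
  with lnT have "(30 * C0)^3 \<le> (ln T powr (1/3))^3" by simp
  then show ?thesis using power_le_imp_le_base[of "30 * C0" 2 "ln T powr (1/3)"] by simp
qed

lemma unlearnable_fraction_small: "0 \<le> pun" "2 * (pun * N) \<le> N"
proof -
  have "C * Lb * 1 \<le> C * Lb * (real m * real P)"
    using one_le_mP C_pos one_le_Lb by (intro mult_left_mono) auto
  then have "C * Lb \<le> N" using N_ge by (simp add: algebra_simps)
  moreover have "ln d \<le> Lb"
  proof -
    have "0 < real T * real N * real m * real P / \<delta>"
      using one_le_T one_le_N one_le_m two_le_P pos by simp
    then have "1 \<le> real T * real N * real m * real P / \<delta>"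
      using ln_ge_zero_iff one_le_La unfolding La_def by (metis order_trans zero_le_one)
    then have "real d * 1 \<le> real d * (real T * real N * real m * real P / \<delta>)"
      using d_pos by (intro mult_left_mono) auto
    then show ?thesis unfolding Lb_def using d_pos by (simp add: algebra_simps)
  qed
  ultimately have "C * ln d \<le> N" using C_pos mult_left_mono[of "ln d" Lb C] by linarith
  then have "ln d \<le> N / C" using C_pos by (simp add: field_simps)
  also have "\<dots> \<le> C * N / 2"
  proof -
    have "2 * 1 \<le> C * C" using C_large by (intro mult_mono) auto
    then have "2 * real N \<le> C * C * real N" using one_le_N by (intro mult_right_mono) auto
    then show ?thesis using C_pos by (simp add: field_simps)
  qed
  finally have ln_d: "1/C * ln d \<le> N / 2" using C_pos by (simp add: field_simps)
  have N: "0 < real N" using one_le_N by simp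
  have "0 \<le> pun \<and> 2 * (pun * N) \<le> N"
  proof (cases "pun = 0")
    case False
    with pun_cases have "C / N \<le> pun" and le: "pun \<le> 1/C * ln d / N" by auto
    moreover have "pun * N \<le> 1/C * ln d" using mult_right_mono[OF le, of N] N by simp
    moreover have "0 \<le> C / N" using C_pos N by simp
    ultimately show ?thesis using ln_d by linarith
  qed simp
  then show "0 \<le> pun" "2 * (pun * N) \<le> N" by auto
qed

lemma sixteen_le_C: "16 \<le> C"
  using C_large by simp

lemma init_log_bounds: "1 \<le> ln (16 * m / \<delta>)" "ln (16 * m / \<delta>) \<le> Lb"
proof -
  have "16 \<le> 16 * real m / \<delta>"
    using one_le_m pos le_divide_of_le_one[of "16 * real m" \<delta>] by simp
  then show "1 \<le> ln (16 * m / \<delta>)" by (intro one_le_ln) simp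
  have "1 \<le> real d * (real N * real P)"
    using one_le_mult[OF _ one_le_NP, of "real d"] d_pos by simp
  then have "16 * 1 \<le> real T * (real d * (real N * real P))"
    using C_le_T sixteen_le_C by (intro mult_mono) auto
  then have "16 * real m \<le> real T * real d * real N * real m * real P"
    using one_le_m mult_right_mono[of 16 _ "real m"] by (simp add: algebra_simps)
  then have "16 * real m / \<delta> \<le> real T * real d * real N * real m * real P / \<delta>"
    using pos by (simp add: divide_right_mono)
  moreover have "0 < 16 * real m / \<delta>" using one_le_m pos by simp
  ultimately show "ln (16 * m / \<delta>) \<le> Lb" unfolding Lb_def by simp
qed

lemma init_radius_le: "s0 * sqrt (2 * ln (16 * m / \<delta>)) \<le> 2 / (C * \<alpha> * m powr (2/3))"
proof -
  have "s0 * sqrt (2 * ln (16 * m / \<delta>)) \<le> s0 * (2 * Lb)"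
    using sqrt_le_self[of "2 * ln (16 * m / \<delta>)"] init_log_bounds pos by (intro mult_left_mono) auto
  also have "\<dots> \<le> 1/C * (1 / (\<alpha> * m powr (2/3))) / Lb * (2 * Lb)"
    using s0_le_inv(2) Lb_pos by (intro mult_right_mono) auto
  also have "\<dots> = 2 / (C * \<alpha> * m powr (2/3))"
    using Lb_pos C_pos pos one_le_m by (simp add: field_simps)
  finally show ?thesis .
qed

lemma init_radius_small:
  "m * (s0 * sqrt (2 * ln (16 * m / \<delta>)))^3 \<le> (C0 / (\<alpha> * m powr (1/3)))^3 / 2"
proof -
  define \<mu> where "\<mu> = m powr (1/3)"
  define r where "r = s0 * sqrt (2 * ln (16 * m / \<delta>))"
  have \<mu>: "0 < \<mu>" "\<mu>^3 = m" "\<mu>^2 = m powr (2/3)"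
    using one_le_m powr_power[of "real m" "1/3"] by (auto simp: \<mu>_def)
  have "0 \<le> r" "r \<le> 2 / (C * \<alpha> * \<mu>^2)"
    using pos init_log_bounds init_radius_le \<mu>(3) by (auto simp: r_def)
  then have "\<mu> * r \<le> \<mu> * (2 / (C * \<alpha> * \<mu>^2))"
    using \<mu>(1) by (intro mult_left_mono) auto
  also have "\<dots> = 2 / (C * \<alpha> * \<mu>)"
    using \<mu>(1) C_pos pos by (simp add: power2_eq_square)
  also have "\<dots> \<le> C0 / (\<alpha> * \<mu>) / 2"
  proof -
    have "4 * 1 \<le> C * C0" using sixteen_le_C one_le_C0 by (intro mult_mono) auto
    then show ?thesis using \<mu>(1) pos C_pos by (simp add: field_simps)
  qed
  finally have "(\<mu> * r)^3 \<le> (C0 / (\<alpha> * \<mu>) / 2)^3"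
    using \<open>0 \<le> r\<close> \<mu>(1) by (intro power_mono) auto
  also have "\<dots> = (C0 / (\<alpha> * \<mu>))^3 / 8" by (simp add: power_divide)
  also have "\<dots> \<le> (C0 / (\<alpha> * \<mu>))^3 / 2"
    using one_le_C0 \<mu>(1) pos by simp
  finally show ?thesis
    unfolding r_def[symmetric] \<mu>_def[symmetric] using \<mu>(2) by (simp add: power_mult_distrib)
qed

lemma noise_log_bounds: "1 \<le> ln (16 * N * m * P / \<delta>)" "ln (16 * N * m * P / \<delta>) \<le> Lb"
proof -
  have NmP: "1 \<le> real N * (real m * real P)" using one_le_mult[OF _ one_le_mP, of "real N"] one_le_N by simp
  have "16 \<le> real (16 * N * m * P)" using NmP by (simp add: mult.assoc)
  then have "16 \<le> real (16 * N * m * P) / \<delta>" using pos le_divide_of_le_one[of "real (16 * N * m * P)" \<delta>] by simp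
  then show "1 \<le> ln (16 * N * m * P / \<delta>)" by (intro one_le_ln) simp
  have "16 * 1 \<le> real T * real d" using C_le_T sixteen_le_C d_pos by (intro mult_mono) auto
  then have "real (16 * N * m * P) \<le> real T * real d * real N * real m * real P"
    using mult_right_mono[of 16 "real T * real d" "real N * (real m * real P)"] by (simp add: algebra_simps)
  then have "real (16 * N * m * P) / \<delta> \<le> real T * real d * real N * real m * real P / \<delta>"
    using pos by (simp add: divide_right_mono)
  with \<open>16 \<le> real (16 * N * m * P) / \<delta>\<close> show "ln (16 * N * m * P / \<delta>) \<le> Lb"
    unfolding Lb_def by simp
qed

lemma cross_noise_log_bounds: "1 \<le> ln (16 * N^2 * P^2 / \<delta>)" "ln (16 * N^2 * P^2 / \<delta>) \<le> 2 * La"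
proof -
  have NP: "1 \<le> real N ^ 2 * real P ^ 2" using one_le_N two_le_P by (intro one_le_mult one_le_power) auto
  then have "16 \<le> real (16 * N^2 * P^2)" by simp
  then have "16 \<le> real (16 * N^2 * P^2) / \<delta>" using pos le_divide_of_le_one[of "real (16 * N^2 * P^2)" \<delta>] by simp
  then show "1 \<le> ln (16 * N^2 * P^2 / \<delta>)" by (intro one_le_ln) simp
  have "real (16 * N^2 * P^2) / \<delta> \<le> real (16 * N^2 * P^2) / \<delta>^2"
    using pos \<open>16 \<le> real (16 * N^2 * P^2)\<close> by (intro divide_left_mono) (auto simp: power2_eq_square mult_left_le)
  also have "\<dots> \<le> (real T * real N * real m * real P / \<delta>)^2"
  proof -
    have "4 ^ 2 * 1 \<le> real T ^ 2 * real m ^ 2"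
      using C_le_T sixteen_le_C one_le_m by (intro mult_mono power_mono one_le_power) auto
    then have "16 * (real N^2 * real P^2) \<le> real T ^ 2 * real m ^ 2 * (real N^2 * real P^2)"
      by (intro mult_right_mono) auto
    moreover have "(real T * real N * real m * real P)^2 = real T ^ 2 * real m ^ 2 * (real N^2 * real P^2)"
      by (simp add: power_mult_distrib mult_ac)
    ultimately have "real (16 * N^2 * P^2) \<le> (real T * real N * real m * real P)^2" by simp
    then have "real (16 * N^2 * P^2) / \<delta>^2 \<le> (real T * real N * real m * real P)^2 / \<delta>^2"
      by (rule divide_right_mono) simp
    then show ?thesis by (simp add: power_divide)
  qed
  finally have le_sq: "real (16 * N^2 * P^2) / \<delta> \<le> (real T * real N * real m * real P / \<delta>)^2" .
  have y: "0 < real T * real N * real m * real P / \<delta>"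
    using one_le_T one_le_N one_le_m two_le_P pos by simp
  have "ln (16 * N^2 * P^2 / \<delta>) \<le> ln ((real T * real N * real m * real P / \<delta>)^2)"
    using le_sq \<open>16 \<le> real (16 * N^2 * P^2) / \<delta>\<close> by (intro ln_mono) auto
  also have "\<dots> = 2 * La" unfolding La_def using y by (simp add: ln_realpow)
  finally show "ln (16 * N^2 * P^2 / \<delta>) \<le> 2 * La" .
qed

lemma first_noise_term_le: "m * P * (3 * s0 * sn * sqrt (d * ln (16 * N * m * P / \<delta>)))^3 \<le> 27 / C^3"
proof -
  define \<mu> where "\<mu> = m powr (1/3) * P powr (1/3)"
  define r where "r = 3 * s0 * sn * sqrt (d * ln (16 * N * m * P / \<delta>))"
  have \<mu>: "1 \<le> \<mu>" "\<mu>^3 = m * P" "\<mu>^2 = m powr (2/3) * P powr (2/3)"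
    using one_le_m two_le_P powr_power[of "real m" "1/3"] powr_power[of "real P" "1/3"]
    by (auto simp: \<mu>_def power_mult_distrib ge_one_powr_ge_zero intro: one_le_mult)
  have r: "r = 3 * (s0 * (sn * sqrt d)) * sqrt (ln (16 * N * m * P / \<delta>))"
    unfolding r_def by (simp add: real_sqrt_mult)
  have "s0 * (sn * sqrt d) \<le> 1/C * (1 / (\<mu>^2 * sn * sqrt d)) / Lb * (sn * sqrt d)"
    using s0_le_inv(1) pos d_pos unfolding \<mu>(3) by (intro mult_right_mono) auto
  also have "\<dots> = 1 / (C * \<mu>^2 * Lb)"
    using pos d_pos \<mu>(1) C_pos Lb_pos by (simp add: field_simps)
  finally have "s0 * (sn * sqrt d) \<le> 1 / (C * \<mu>^2 * Lb)" .
  moreover have "sqrt (ln (16 * N * m * P / \<delta>)) \<le> Lb"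
    using sqrt_le_self noise_log_bounds(1,2) by (meson order_trans)
  ultimately have "r \<le> 3 * (1 / (C * \<mu>^2 * Lb)) * Lb"
    unfolding r using pos d_pos C_pos Lb_pos \<mu>(1) noise_log_bounds(1) by (intro mult_mono mult_left_mono) auto
  also have "\<dots> = 3 / (C * \<mu>^2)" using Lb_pos by simp
  finally have "\<mu> * r \<le> \<mu> * (3 / (C * \<mu>^2))"
    using \<mu>(1) by (intro mult_left_mono) auto
  also have "\<dots> = 3 / (C * \<mu>)" using \<mu>(1) by (simp add: power2_eq_square)
  also have "\<dots> \<le> 3 / C" using \<mu>(1) C_pos by (intro divide_left_mono) auto
  finally have "\<mu> * r \<le> 3 / C" .
  moreover have "0 \<le> r" using pos noise_log_bounds d_pos by (simp add: r_def)
  ultimately have "(\<mu> * r)^3 \<le> (3 / C)^3" using \<mu>(1) by (intro power_mono) auto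
  then show ?thesis unfolding r_def[symmetric] using \<mu>(2) by (simp add: power_mult_distrib power_divide)
qed

lemma sqrt_d_ge: "sqrt C * (real m * real P * real N * La^2) \<le> sqrt d"
proof (rule real_le_rsqrt)
  have "(sqrt C * (real m * real P * real N * La^2))^2 = (sqrt C)^2 * (real m ^ 2 * real P ^ 2 * real N ^ 2 * (La^2)^2)"
    by (simp only: power_mult_distrib)
  also have "\<dots> = C * real m ^ 2 * real P ^ 2 * real N ^ 2 * La^4"
    using C_pos by (simp add: mult.assoc flip: power_mult)
  finally have "(sqrt C * (real m * real P * real N * La^2))^2 = C * real m ^ 2 * real P ^ 2 * real N ^ 2 * La^4" .
  then show "(sqrt C * (real m * real P * real N * La^2))^2 \<le> d" using d_ge by simp
qed

lemma second_noise_term_le: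
  "m * P * (21 * pun * N * P * ln T powr (1/3) / sqrt d * sqrt (ln (16 * N^2 * P^2 / \<delta>)))^3
     \<le> 74088 / sqrt C"
proof -
  define x where "x = ln T powr (1/3)"
  define y where "y = sqrt (ln (16 * N^2 * P^2 / \<delta>))"
  define r where "r = 21 * pun * N * P * x / sqrt d * y"
  have pun: "0 \<le> pun * N" "pun * N \<le> N" using unlearnable_fraction_small by auto
  have x: "0 \<le> x" "x \<le> La"
    using powr_one_third_le ln_T_le_La one_le_La ln_C_le_ln_T one_le_ln[of C] sixteen_le_C
    by (auto simp: x_def)
  have y: "0 \<le> y" "y \<le> 2 * La"
    using sqrt_le_self cross_noise_log_bounds unfolding y_def by (auto intro: order_trans)
  have NP: "21 * (pun * N) * P \<le> 21 * real N * real P" using pun by (intro mult_right_mono mult_left_mono) auto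
  have xy: "x * y \<le> La * (2 * La)" using x y La_pos by (intro mult_mono) auto
  have num: "21 * (pun * N) * P * (x * y) \<le> 21 * real N * real P * (La * (2 * La))"
    using mult_mono[OF NP xy] x y by simp
  have "r = 21 * (pun * N) * P * (x * y) / sqrt d" using d_pos by (simp add: r_def field_simps)
  also have "\<dots> \<le> 21 * real N * real P * (La * (2 * La)) / (sqrt C * (real m * real P * real N * La^2))"
    using num sqrt_d_ge pun x y C_pos one_le_m two_le_P one_le_N La_pos by (intro frac_le) auto
  also have "\<dots> = 42 / (sqrt C * m)"
    using one_le_m two_le_P one_le_N La_pos by (simp add: field_simps power2_eq_square)
  finally have "r \<le> 42 / (sqrt C * m)" .
  moreover have "0 \<le> r" using pun x y by (simp add: r_def)
  ultimately have "m * P * r^3 \<le> m * P * (42 / (sqrt C * m))^3"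
    by (intro mult_left_mono power_mono) auto
  also have "\<dots> = 74088 * P / ((sqrt C)^3 * m^2)"
    using one_le_m C_pos by (simp add: power_divide power_mult_distrib field_simps power2_eq_square power3_eq_cube)
  also have "\<dots> \<le> 74088 * (sqrt C)^2 / ((sqrt C)^3 * 1)"
    using P_le_C one_le_m C_pos by (intro frac_le mult_left_mono) (auto simp: one_le_power)
  also have "\<dots> = 74088 / sqrt C" using C_pos by (simp add: power2_eq_square power3_eq_cube)
  finally show ?thesis unfolding r_def x_def y_def .
qed

lemma noise_radius_small:
  "m * P * (3 * s0 * sn * sqrt (d * ln (16 * N * m * P / \<delta>))
      + 21 * pun * N * P * ln T powr (1/3) / sqrt d * sqrt (ln (16 * N^2 * P^2 / \<delta>)))^3 \<le> 1"
proof -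
  have "m * P * (3 * s0 * sn * sqrt (d * ln (16 * N * m * P / \<delta>))
      + 21 * pun * N * P * ln T powr (1/3) / sqrt d * sqrt (ln (16 * N^2 * P^2 / \<delta>)))^3
    \<le> m * P * (4 * ((3 * s0 * sn * sqrt (d * ln (16 * N * m * P / \<delta>)))^3
      + (21 * pun * N * P * ln T powr (1/3) / sqrt d * sqrt (ln (16 * N^2 * P^2 / \<delta>)))^3))"
    using pos d_pos noise_log_bounds cross_noise_log_bounds unlearnable_fraction_small
    by (intro mult_left_mono cube_add_le) auto
  also have "\<dots> \<le> 4 * (27 / C^3 + 74088 / sqrt C)"
    using first_noise_term_le second_noise_term_le by (simp add: algebra_simps)
  also have "\<dots> \<le> 1"
  proof -
    have "10^6 \<le> sqrt C" using C_large by (intro real_le_rsqrt) simp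
    then have "74088 / sqrt C \<le> 74088 / 10^6" using C_pos by (intro divide_left_mono) auto
    have "1 \<le> C^2" using C_large by (simp add: one_le_power)
    then have "C * 1 \<le> C * C^2" using C_pos by (intro mult_left_mono) auto
    also have "\<dots> = C^3" by (simp add: power2_eq_square power3_eq_cube)
    finally have "10^12 \<le> C^3" using C_large by linarith
    then have "27 / C^3 \<le> 27 / 10^12" using C_pos by (intro divide_left_mono) auto
    with \<open>74088 / sqrt C \<le> 74088 / 10^6\<close> show ?thesis by simp
  qed
  finally show ?thesis .
qed

end

lemma learnable_psi_bounds:
  fixes N P d m T T0 t i :: nat and C C0 \<alpha> sn s0 \<eta> \<epsilon> \<Gamma> \<delta> :: real and SL SU :: "nat set"
    and y :: "nat \<Rightarrow> real" and s :: "nat \<Rightarrow> nat" and x :: "nat \<Rightarrow> nat \<Rightarrow> nat \<Rightarrow> real"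
    and W :: "nat \<Rightarrow> nat \<Rightarrow> nat \<Rightarrow> real" and Xt :: "nat \<Rightarrow> nat \<Rightarrow> nat \<Rightarrow> nat \<Rightarrow> real"
  assumes C0: "1 \<le> C0" and C: "max (10^12) (exp (27000 * C0^3)) \<le> C"
    and pos: "0 < \<alpha>" "0 < sn" "0 < s0" "0 < \<eta>" "0 < \<epsilon>" "0 < \<delta>" "\<delta> < 1"
    and partition: "SL \<union> SU = {1..N}" "SL \<inter> SU = {}"
    and std: "std_conditions C N P d m \<alpha> sn s0 \<eta> \<epsilon> \<Gamma> \<delta> T (real (card SU) / real N)"
    and data: "\<forall>i\<in>{1..N}. y i \<in> {-1, 1} \<and> s i \<in> {1..P}
        \<and> x i (s i) = (\<lambda>j. \<alpha> * y i * (if i \<in> SL then unit_vec 1 j else unit_vec d j))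
        \<and> (\<forall>p\<in>{1..P}. p \<noteq> s i \<longrightarrow> x i p 1 = 0 \<and> x i p d = 0)"
    and E: "event_E N P d m sn s0 \<delta> y s x (W 0)"
    and adversarial: "\<forall>\<tau> i. i \<in> {1..N} \<longrightarrow> Xt \<tau> i \<in> adm_set d \<epsilon> (s i) (x i)
        \<and> (\<forall>X' \<in> adm_set d \<epsilon> (s i) (x i).
              logloss (y i * fnet m P d (W \<tau>) X') \<le> logloss (y i * fnet m P d (W \<tau>) (Xt \<tau> i)))"
    and gradient_step: "\<forall>\<tau>. \<forall>r\<in>{1..m}. \<forall>j\<in>{1..d}.
        W (Suc \<tau>) r j = (if j = d then 0 else
           W \<tau> r j - \<eta> / N * (\<Sum>i=1..N. grad_entry m P d (W \<tau>) (y i) (Xt \<tau> i) r j))"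
    and threshold_crossed: "Max ((\<lambda>r. W T0 r 1) ` {1..m}) > C0 / (\<alpha> * m powr (1/3))"
    and t: "T0 + 1 \<le> t" "t \<le> T"
    and noise: "\<forall>\<tau> \<le> t. \<forall>r\<in>{1..m}. \<forall>i\<in>SL. \<forall>j\<in>{1..P}. j \<noteq> s i \<longrightarrow>
        \<bar>inner_d d (W \<tau> r) (x i j)\<bar> \<le> 3 * s0 * sn * sqrt (d * ln (16 * N * m * P / \<delta>))
          + 21 * (real (card SU) / N) * N * P * (ln T) powr (1/3) / sqrt d * sqrt (ln (16 * N^2 * P^2 / \<delta>))"
    and i: "i \<in> SL"
  shows "(\<Sum>\<tau>=T0..<t. psi (y i * fnet m P d (W \<tau>) (Xt \<tau> i)))
          \<le> 2 * m powr (2/3) * (ln T) powr (1/3) / (C0^2 * (1 - \<epsilon>/\<alpha>)^3 * \<eta> * \<alpha>^2)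
      \<and> psi (y i * fnet m P d (W t) (Xt t i))
          \<le> 4 * m powr (2/3) * (ln T) powr (1/3) / (C0^2 * (1 - \<epsilon>/\<alpha>)^3 * \<eta> * \<alpha>^2 * (t - T0))"
proof -
  have N: "1 \<le> N" using i partition by fastforce
  interpret params: standing_conditions C C0 N P d m T \<alpha> sn s0 \<eta> \<epsilon> \<Gamma> \<delta> "real (card SU) / real N"
    using C C0 pos std N t by unfold_locales auto
  have fin: "finite SL" "finite SU" using partition(1) finite_subset[of _ "{1..N}"] by auto
  have "card SL + card SU = N" using card_Un_disjoint[OF fin partition(2)] partition(1) by simp
  then have majority: "real N \<le> 2 * real (card SL)"
    using params.unlearnable_fraction_small(2) N by (simp add: field_simps)
  define \<iota> where "\<iota> = s0 * sqrt (2 * ln (16 * real m / \<delta>))"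
  have init: "\<forall>r\<in>{1..m}. - \<iota> \<le> W 0 r 1"
    using event_E_first_coord_lower[OF E] params.two_le_d unfolding \<iota>_def by simp
  define B where "B = 3 * s0 * sn * sqrt (d * ln (16 * N * m * P / \<delta>))
    + 21 * (real (card SU) / N) * N * P * (ln T) powr (1/3) / sqrt d * sqrt (ln (16 * N^2 * P^2 / \<delta>))"
  have B0: "0 \<le> B"
    unfolding B_def using pos params.noise_log_bounds params.cross_noise_log_bounds
      params.unlearnable_fraction_small(1) by simp
  have B3: "real m * real P * B^3 \<le> 1"
    using params.noise_radius_small unfolding B_def by simp
  have noise_small: "\<bar>y k * (\<Sum>r=1..m. \<Sum>p\<in>{1..P}-{s k}. (inner_d d (W \<tau> r) (x k p))^3)\<bar> \<le> 1"
    if "\<tau> \<le> t" "k \<in> SL" for \<tau> k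
  proof -
    have "k \<in> {1..N}" using that(2) partition(1) by auto
    then have "y k \<in> {-1, 1}" using data by blast
    then have "\<bar>y k\<bar> = 1" by auto
    moreover have "\<bar>inner_d d (W \<tau> r) (x k p)\<bar> \<le> B" if "r \<in> {1..m}" "p \<in> {1..P} - {s k}" for r p
      using noise \<open>\<tau> \<le> t\<close> \<open>k \<in> SL\<close> that unfolding B_def by blast
    then have "\<bar>\<Sum>r=1..m. \<Sum>p\<in>{1..P}-{s k}. (inner_d d (W \<tau> r) (x k p))^3\<bar> \<le> real m * real P * B^3"
      by (rule abs_sum_cubes_le[OF B0])
    ultimately show ?thesis using B3 by (simp add: abs_mult)
  qed
  interpret training: adversarial_training N P d m \<alpha> \<eta> \<epsilon> SL SU y s x W Xt
    using pos params.eps_le_half_alpha params.two_le_d partition data adversarial gradient_step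
    by unfold_locales auto
  interpret dynamics: adversarial_training_after_threshold N P d m \<alpha> \<eta> \<epsilon> SL SU y s x W Xt C0 \<iota> T0 t
    using params.one_le_m C0 majority init params.init_radius_small threshold_crossed t
      params.eta_alpha_sq_small noise_small params.init_log_bounds(1) pos(3)
    by unfold_locales (auto simp: \<iota>_def training.noise_margin_def)
  show ?thesis
    using dynamics.psi_margin_bounds[OF i params.cube_root_ln_T_large]
    unfolding training.margin_def by simp
qed

theorem lemmaF7:
  "\<exists>C0bar. \<forall>C0 \<ge> C0bar. \<exists>C1. \<forall>C \<ge> C1.
   \<forall>(N::nat) (P::nat) (d::nat) (m::nat) (\<alpha>::real) (sn::real) (s0::real) (\<eta>::real) (\<epsilon>::real)
    (\<Gamma>::real) (\<delta>::real) (T::nat) (SL::nat set) (SU::nat set)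
    (y::nat \<Rightarrow> real) (s::nat \<Rightarrow> nat) (x::nat \<Rightarrow> nat \<Rightarrow> nat \<Rightarrow> real)
    (W::nat \<Rightarrow> nat \<Rightarrow> nat \<Rightarrow> real) (Xt::nat \<Rightarrow> nat \<Rightarrow> nat \<Rightarrow> nat \<Rightarrow> real)
    (T0::nat) (t::nat).
     0 < C \<longrightarrow> 0 < C0 \<longrightarrow>
     0 < \<alpha> \<longrightarrow> 0 < sn \<longrightarrow> 0 < s0 \<longrightarrow> 0 < \<eta> \<longrightarrow> 0 < \<epsilon> \<longrightarrow> 0 < \<Gamma> \<longrightarrow>
     0 < \<delta> \<longrightarrow> \<delta> < 1 \<longrightarrow>
     SL \<union> SU = {1..N} \<longrightarrow> SL \<inter> SU = {} \<longrightarrow>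
     std_conditions C N P d m \<alpha> sn s0 \<eta> \<epsilon> \<Gamma> \<delta> T (real (card SU) / real N) \<longrightarrow>
     (\<forall>i\<in>{1..N}. y i \<in> {-1, 1} \<and> s i \<in> {1..P}
        \<and> x i (s i) = (\<lambda>j. \<alpha> * y i * (if i \<in> SL then unit_vec 1 j else unit_vec d j))
        \<and> (\<forall>p\<in>{1..P}. p \<noteq> s i \<longrightarrow> x i p 1 = 0 \<and> x i p d = 0)) \<longrightarrow>
     (\<forall>r\<in>{1..m}. W 0 r d = 0) \<longrightarrow>
     event_E N P d m sn s0 \<delta> y s x (W 0) \<longrightarrow>
     (\<forall>\<tau> i. i \<in> {1..N} \<longrightarrow> Xt \<tau> i \<in> adm_set d \<epsilon> (s i) (x i)
        \<and> (\<forall>X' \<in> adm_set d \<epsilon> (s i) (x i).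
              logloss (y i * fnet m P d (W \<tau>) X') \<le> logloss (y i * fnet m P d (W \<tau>) (Xt \<tau> i)))) \<longrightarrow>
     (\<forall>\<tau>. \<forall>r\<in>{1..m}. \<forall>j\<in>{1..d}.
        W (Suc \<tau>) r j = (if j = d then 0 else
           W \<tau> r j - \<eta> / N * (\<Sum>i=1..N. grad_entry m P d (W \<tau>) (y i) (Xt \<tau> i) r j))) \<longrightarrow>
     Max ((\<lambda>r. W T0 r 1) ` {1..m}) > C0 / (\<alpha> * m powr (1/3)) \<longrightarrow>
     (\<forall>\<tau> < T0. \<not> (Max ((\<lambda>r. W \<tau> r 1) ` {1..m}) > C0 / (\<alpha> * m powr (1/3)))) \<longrightarrow>
     T0 + 1 \<le> t \<longrightarrow> t \<le> T \<longrightarrow>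
     (\<forall>\<tau> \<le> t. \<forall>r\<in>{1..m}. \<forall>i\<in>SL. \<forall>j\<in>{1..P}. j \<noteq> s i \<longrightarrow>
        \<bar>inner_d d (W \<tau> r) (x i j)\<bar> \<le> 3 * s0 * sn * sqrt (d * ln (16 * N * m * P / \<delta>))
          + 21 * (real (card SU) / N) * N * P * (ln T) powr (1/3) / sqrt d * sqrt (ln (16 * N^2 * P^2 / \<delta>))) \<longrightarrow>
     (\<forall>i\<in>SL.
        (\<Sum>\<tau>=T0..<t. psi (y i * fnet m P d (W \<tau>) (Xt \<tau> i)))
          \<le> 2 * m powr (2/3) * (ln T) powr (1/3) / (C0^2 * (1 - \<epsilon>/\<alpha>)^3 * \<eta> * \<alpha>^2)
      \<and> psi (y i * fnet m P d (W t) (Xt t i))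
          \<le> 4 * m powr (2/3) * (ln T) powr (1/3) / (C0^2 * (1 - \<epsilon>/\<alpha>)^3 * \<eta> * \<alpha>^2 * (t - T0)))"
  apply (rule exI[of _ 1], intro allI impI)
  subgoal for C0
    apply (rule exI[of _ "max (10^12) (exp (27000 * C0^3))"], intro allI impI ballI)
    subgoal for C N P d m \<alpha> sn s0 \<eta> \<epsilon> \<Gamma> \<delta> T SL SU y s x W Xt T0 t i
      by (rule learnable_psi_bounds) assumption+
    done
  done

end
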